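(* Let $n\ge2$ and let $(y,z)$ be a solution on $[0,\infty)$ with $y,z>0$ of \[\dot y=z^2(n+1-y)-ny,\qquad \dot z=\tfrac{n+1}{n}z(n-1+y)-(n+z^2)z,\] for which $y,z\to0$ as $t\to\infty$. Then $\mu_{y,z}\in\mathfrak g\otimes\Lambda^2\mathfrak g^*$ ($\mathfrak g=\mathfrak{sl}_{n+1}(\mathbb C)$) converges as $t\to\infty$ to \[\mu_\infty:=[\cdot,\cdot]\big|_{\mathfrak{sl}_n(\mathbb C)\wedge\mathfrak{sl}_n(\mathbb C)}+[\cdot,\cdot]\big|_{\mathfrak{sl}_n(\mathbb C)\wedge\mathfrak s}+\sqrt{\frac{n^2-2}{n(n+1)}}\,\mathrm{Pr}_{\mathbb CI}\circ[\cdot,\cdot]\big|_{\mathfrak s\wedge\mathfrak s}.\] Moreover, the torsion-twisted Chern--Ricci operator $P_\infty=\lim_{t\to\infty}P_{y,z}$ of $(\mathfrak g,\mu_\infty,\langle\cdot,\cdot\rangle)$ is $P_\infty=n\,\mathrm{id}-\tfrac1nD$, where $D:=2\,\mathrm{id}_{\mathbb CI}+\mathrm{id}_{\mathfrak s}$ is a derivation of $\mu_\infty$. In particular, the simply-connected complex Lie group with left-invariant Hermitian metric corresponding to $(\mathfrak g,\mu_\infty,\langle\cdot,\cdot\rangle)$ is a shrinking algebraic $\mathrm{HCF}_+$ soliton.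
   Context: $\langle X,Y\rangle=\operatorname{tr}(XY^* )$ on $\mathfrak g=\mathfrak{sl}_{n+1}(\mathbb C)=\mathfrak{sl}_n(\mathbb C)\oplus\mathbb CI\oplus\mathfrak s$ (orthogonal), with $\mathfrak{sl}_n(\mathbb C)$ the upper-left block, $I=\sqrt{\tfrac1{n(n+1)}}\operatorname{diag}(1,\dots,1,-n)$, $\mathfrak s=\operatorname{span}_{\mathbb C}\{e_{i(n+1)},e_{(n+1)i}\}_{i=1}^n$; $\mathrm{Pr}_V$ is orthogonal projection onto $V$ and $[\cdot,\cdot]$ the commutator. $h_{y,z}=\mathrm{id}_{\mathfrak{sl}_n(\mathbb C)}+y^{-1/2}\mathrm{id}_{\mathbb CI}+z^{-1/2}\mathrm{id}_{\mathfrak s}$ and $\mu_{y,z}=h_{y,z}[h_{y,z}^{-1}\cdot,h_{y,z}^{-1}\cdot]$. For a complex Lie bracket $\mu$ and Hermitian inner product $g$, the torsion-twisted Chern--Ricci operator $P^g_\mu$ is the $g$-Hermitian endomorphism with $g(P^g_\mu X,X)=\sum_{i<j}|g(\mu(e_i,e_j),X)|^2$ for a $g$-unitary basis $\{e_i\}$; $P_{y,z}:=P^{\langle\cdot,\cdot\rangle}_{\mu_{y,z}}$. A simply-connected complex Lie group with left-invariant metric given by $(\mathfrak g,\mu,g)$ is a semi-algebraic $\mathrm{HCF}_+$ soliton if $P^g_\mu=\lambda\,\mathrm{id}+\tfrac12(D'+D'^* )$ with $\lambda\in\mathbb R$ and $D'$ a complex-linear derivation of $\mu$; algebraic if additionally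 $D'^*$ is a derivation; shrinking if the associated self-similar $\mathrm{HCF}_+$ solution $g_t=c(t)\varphi_t^*g$ has $c$ decreasing. *)

theory Defs
  imports "HOL-Analysis.Analysis"
begin

text \<open>Complex (n+1)x(n+1) matrices are represented as functions nat => nat => complex,
  with indices 0..n; index n plays the role of the (n+1)-st row/column.
  Matrices of interest vanish outside {0..n} x {0..n}.\<close>

type_synonym cmat = "nat \<Rightarrow> nat \<Rightarrow> complex"

definition madd :: "cmat \<Rightarrow> cmat \<Rightarrow> cmat" where
  "madd X Y = (\<lambda>a b. X a b + Y a b)"

definition mdiff :: "cmat \<Rightarrow> cmat \<Rightarrow> cmat" where
  "mdiff X Y = (\<lambda>a b. X a b - Y a b)"

definition msc :: "complex \<Rightarrow> cmat \<Rightarrow> cmat" where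
  "msc c X = (\<lambda>a b. c * X a b)"

definition mzero :: cmat where
  "mzero = (\<lambda>a b. 0)"

definition mtrace :: "nat \<Rightarrow> cmat \<Rightarrow> complex" where
  "mtrace n X = (\<Sum>a\<le>n. X a a)"

definition slg :: "nat \<Rightarrow> cmat set" where
  "slg n = {X. (\<forall>a b. (n < a \<or> n < b) \<longrightarrow> X a b = 0) \<and> mtrace n X = 0}"

definition minner :: "nat \<Rightarrow> cmat \<Rightarrow> cmat \<Rightarrow> complex" where
  "minner n X Y = (\<Sum>a\<le>n. \<Sum>b\<le>n. X a b * cnj (Y a b))"

definition comm :: "nat \<Rightarrow> cmat \<Rightarrow> cmat \<Rightarrow> cmat" where
  "comm n X Y = (\<lambda>a b. \<Sum>c\<le>n. X a c * Y c b - Y a c * X c b)"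

definition Iden :: "nat \<Rightarrow> cmat" where
  "Iden n = (\<lambda>a b. if a = b \<and> a \<le> n
      then complex_of_real (sqrt (1 / (real n * (real n + 1)))) * (if a < n then 1 else - of_nat n)
      else 0)"

text \<open>Orthogonal projections onto CI, s, sl_n (within g = sl_n + CI + s).\<close>
definition prCI :: "nat \<Rightarrow> cmat \<Rightarrow> cmat" where
  "prCI n X = msc (minner n X (Iden n)) (Iden n)"

definition prS :: "nat \<Rightarrow> cmat \<Rightarrow> cmat" where
  "prS n X = (\<lambda>a b. if (a < n \<and> b = n) \<or> (a = n \<and> b < n) then X a b else 0)"

definition prSL :: "nat \<Rightarrow> cmat \<Rightarrow> cmat" where
  "prSL n X = mdiff (mdiff X (prCI n X)) (prS n X)"

definition hmap :: "nat \<Rightarrow> real \<Rightarrow> real \<Rightarrow> cmat \<Rightarrow> cmat" where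
  "hmap n y z X = madd (prSL n X)
      (madd (msc (complex_of_real (y powr (-1/2))) (prCI n X))
            (msc (complex_of_real (z powr (-1/2))) (prS n X)))"

definition hinv :: "nat \<Rightarrow> real \<Rightarrow> real \<Rightarrow> cmat \<Rightarrow> cmat" where
  "hinv n y z X = madd (prSL n X)
      (madd (msc (complex_of_real (y powr (1/2))) (prCI n X))
            (msc (complex_of_real (z powr (1/2))) (prS n X)))"

definition mu_yz :: "nat \<Rightarrow> real \<Rightarrow> real \<Rightarrow> cmat \<Rightarrow> cmat \<Rightarrow> cmat" where
  "mu_yz n y z X Y = hmap n y z (comm n (hinv n y z X) (hinv n y z Y))"

definition mu_inf :: "nat \<Rightarrow> cmat \<Rightarrow> cmat \<Rightarrow> cmat" where
  "mu_inf n X Y =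
     madd (comm n (prSL n X) (prSL n Y))
    (madd (comm n (prSL n X) (prS n Y))
    (madd (comm n (prS n X) (prSL n Y))
          (msc (complex_of_real (sqrt ((real n ^ 2 - 2) / (real n * (real n + 1)))))
               (prCI n (comm n (prS n X) (prS n Y))))))"

definition unitary_basis :: "nat \<Rightarrow> cmat list \<Rightarrow> bool" where
  "unitary_basis n B \<longleftrightarrow> set B \<subseteq> slg n
     \<and> (\<forall>i<length B. \<forall>j<length B. minner n (B!i) (B!j) = (if i = j then 1 else 0))
     \<and> (\<forall>X\<in>slg n. \<exists>c. X = (\<lambda>a b. \<Sum>i<length B. c i * (B!i) a b))"

definition lin_endo :: "nat \<Rightarrow> (cmat \<Rightarrow> cmat) \<Rightarrow> bool" where
  "lin_endo n L \<longleftrightarrow> (\<forall>X\<in>slg n. L X \<in> slg n)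
     \<and> (\<forall>X\<in>slg n. \<forall>Y\<in>slg n. L (madd X Y) = madd (L X) (L Y))
     \<and> (\<forall>X\<in>slg n. \<forall>c. L (msc c X) = msc c (L X))"

text \<open>Torsion-twisted Chern--Ricci operator P^g_mu for g = <.,.>: the Hermitian
  endomorphism of g with <P X, X> = sum_{i<j} |<mu(e_i,e_j), X>|^2 for a (chosen)
  unitary basis; it is made unique by declaring it zero outside g.\<close>
definition P_op :: "nat \<Rightarrow> (cmat \<Rightarrow> cmat \<Rightarrow> cmat) \<Rightarrow> cmat \<Rightarrow> cmat" where
  "P_op n \<mu> = (let B = (SOME B. unitary_basis n B) in
     THE P. lin_endo n P
       \<and> (\<forall>X. X \<notin> slg n \<longrightarrow> P X = mzero)
       \<and> (\<forall>X\<in>slg n. \<forall>Y\<in>slg n. minner n (P X) Y = minner n X (P Y))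
       \<and> (\<forall>X\<in>slg n. minner n (P X) X =
            complex_of_real (\<Sum>j<length B. \<Sum>i<j. (cmod (minner n (\<mu> (B!i) (B!j)) X))\<^sup>2)))"

definition is_derivation :: "nat \<Rightarrow> (cmat \<Rightarrow> cmat \<Rightarrow> cmat) \<Rightarrow> (cmat \<Rightarrow> cmat) \<Rightarrow> bool" where
  "is_derivation n \<mu> D \<longleftrightarrow>
     (\<forall>X\<in>slg n. \<forall>Y\<in>slg n. D (\<mu> X Y) = madd (\<mu> (D X) Y) (\<mu> X (D Y)))"

definition algebraic_soliton :: "nat \<Rightarrow> (cmat \<Rightarrow> cmat \<Rightarrow> cmat) \<Rightarrow> real \<Rightarrow> bool" where
  "algebraic_soliton n \<mu> lam \<longleftrightarrow> (\<exists>D' Ds.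
      lin_endo n D' \<and> lin_endo n Ds
    \<and> (\<forall>X\<in>slg n. \<forall>Y\<in>slg n. minner n (D' X) Y = minner n X (Ds Y))
    \<and> is_derivation n \<mu> D' \<and> is_derivation n \<mu> Ds
    \<and> (\<forall>X\<in>slg n. P_op n \<mu> X =
          madd (msc (complex_of_real lam) X) (msc (1/2) (madd (D' X) (Ds X)))))"

definition shrinking_algebraic_soliton :: "nat \<Rightarrow> (cmat \<Rightarrow> cmat \<Rightarrow> cmat) \<Rightarrow> bool" where
  "shrinking_algebraic_soliton n \<mu> \<longleftrightarrow> (\<exists>lam>0. algebraic_soliton n \<mu> lam)"

definition Dder :: "nat \<Rightarrow> cmat \<Rightarrow> cmat" where
  "Dder n X = madd (msc 2 (prCI n X)) (prS n X)"

end

(*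
  Conjugation by h_{y,z} rescales CI by y^(1/2) and s by z^(1/2), so along g = sl_n + CI + s the
  bracket mu_{y,z} splits into four pieces weighted by 1, sqrt y, z and z / sqrt y.  Along the flow
  y, z -> 0, while z / sqrt y -> sqrt((n^2 - 2) / (n (n + 1))) because y / z^2 solves a linear ODE
  with convergent coefficients; this gives mu_infty.

  P_mu is X |-> sum_{i<j} <X, mu(e_i, e_j)> mu(e_i, e_j), which depends continuously on mu.  For
  mu_infty the quadratic form <P X, X> may be summed over the matrix units E_ab instead of a unitary
  basis, because mu_infty(U, .) and mu_infty(., V) vanish on the identity matrix.  The explicit count
  gives <(n id - D/n) X, X>, and a Hermitian operator is determined by its quadratic form.  Finally D
  is a derivation because mu_infty respects the grading deg sl_n = 0, deg s = 1, deg CI = 2, so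
  P_infty = n id + (D' + adjoint D') / 2 with D' = -D/n: an algebraic soliton with lambda = n > 0.
*)

theory Submission
  imports Defs
begin

section \<open>Matrix algebra on $\mathfrak{sl}_{n+1}$\<close>

lemma madd_apply [simp]: "madd X Y a b = X a b + Y a b" by (simp add: madd_def)
lemma mdiff_apply [simp]: "mdiff X Y a b = X a b - Y a b" by (simp add: mdiff_def)
lemma msc_apply [simp]: "msc c X a b = c * X a b" by (simp add: msc_def)
lemma mzero_apply [simp]: "mzero a b = 0" by (simp add: mzero_def)

lemma msc_mzero [simp]: "msc c mzero = mzero" by (intro ext) simp
lemma madd_mzero_left [simp]: "madd mzero A = A" by (intro ext) simp
lemma madd_mzero_right [simp]: "madd A mzero = A" by (intro ext) simp

lemma sum_atMost_last: "(\<Sum>a\<le>(n::nat). f a) = (\<Sum>a<n. f a) + (f n :: 'a::comm_monoid_add)"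
  using sum.lessThan_Suc[of f n] unfolding lessThan_Suc_atMost by (simp add: add.commute)

lemma mtrace_split: "mtrace n M = (\<Sum>a<n. M a a) + M n n"
  by (simp add: mtrace_def sum_atMost_last)

definition Iscale :: "nat \<Rightarrow> complex" where
  "Iscale n = complex_of_real (sqrt (1 / (real n * (real n + 1))))"

lemma cnj_Iscale [simp]: "cnj (Iscale n) = Iscale n" by (simp add: Iscale_def)

lemma Iscale_sq: assumes "n \<ge> 1" shows "Iscale n * Iscale n = 1 / (of_nat n * (of_nat n + 1))"
proof -
  have "real n * (real n + 1) > 0" using assms by simp
  hence "sqrt (1 / (real n * (real n + 1))) * sqrt (1 / (real n * (real n + 1))) = 1 / (real n * (real n + 1))"
    by simp
  hence "complex_of_real (sqrt (1 / (real n * (real n + 1))) * sqrt (1 / (real n * (real n + 1))))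
      = complex_of_real (1 / (real n * (real n + 1)))" by (rule arg_cong)
  thus ?thesis unfolding Iscale_def of_real_mult of_real_divide of_real_add of_real_of_nat_eq by simp
qed

lemma of_nat_plus_one_neq_zero [simp]: "(of_nat n + 1 :: complex) \<noteq> 0" "(1 + of_nat n :: complex) \<noteq> 0"
  using of_nat_neq_0[of n, where 'a=complex] by (simp_all add: add.commute)

lemma Iscale_sq_mult: assumes "n \<ge> 1" shows "Iscale n * (Iscale n * x) = x / (of_nat n * (of_nat n + 1))"
  using Iscale_sq[OF assms] by (simp add: mult.assoc[symmetric])

lemma Iden_apply:
  "Iden n a b = (if a = b \<and> a \<le> n then Iscale n * (if a < n then 1 else - of_nat n) else 0)"
  by (simp add: Iden_def Iscale_def)

lemma minner_Iden: "minner n M (Iden n) = Iscale n * ((\<Sum>a<n. M a a) - of_nat n * M n n)"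
proof -
  have "minner n M (Iden n) = (\<Sum>a\<le>n. M a a * Iscale n * (if a < n then 1 else - of_nat n))"
    unfolding minner_def
  proof (rule sum.cong[OF refl])
    fix a assume a: "a \<in> {..n}"
    have "(\<Sum>b\<le>n. M a b * cnj (Iden n a b))
        = (\<Sum>b\<le>n. if b = a then M a a * Iscale n * (if a < n then 1 else - of_nat n) else 0)"
      by (rule sum.cong) (use a in \<open>auto simp: Iden_apply\<close>)
    thus "(\<Sum>b\<le>n. M a b * cnj (Iden n a b)) = M a a * Iscale n * (if a < n then 1 else - of_nat n)"
      using a by simp
  qed
  also have "\<dots> = Iscale n * ((\<Sum>a<n. M a a) - of_nat n * M n n)"
    by (simp add: sum_atMost_last sum_distrib_left algebra_simps)
  finally show ?thesis .
qed

lemma minner_Iden_slg: assumes "X \<in> slg n" shows "minner n X (Iden n) = - Iscale n * (of_nat n + 1) * X n n"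
proof -
  have "(\<Sum>a<n. X a a) = - X n n"
    using assms mtrace_split[of n X] by (simp add: slg_def eq_neg_iff_add_eq_0)
  thus ?thesis by (simp add: minner_Iden algebra_simps)
qed

lemma minner_Iden_Iden: assumes "n \<ge> 1" shows "minner n (Iden n) (Iden n) = 1"
proof -
  have "minner n (Iden n) (Iden n) = Iscale n * Iscale n * (of_nat n * (of_nat n + 1))"
    by (simp add: minner_Iden Iden_apply algebra_simps)
  thus ?thesis using assms by (simp add: Iscale_sq)
qed

lemma comm_apply: "comm n A B a b = (\<Sum>c\<le>n. A a c * B c b - B a c * A c b)"
  by (simp add: comm_def)

lemma comm_madd_left: "comm n (madd A B) C = madd (comm n A C) (comm n B C)"
  by (intro ext) (simp add: comm_def sum.distrib[symmetric] algebra_simps)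
lemma comm_madd_right: "comm n C (madd A B) = madd (comm n C A) (comm n C B)"
  by (intro ext) (simp add: comm_def sum.distrib[symmetric] algebra_simps)
lemma comm_mdiff_left: "comm n (mdiff A B) C = mdiff (comm n A C) (comm n B C)"
  by (intro ext) (simp add: comm_def sum_subtractf[symmetric] algebra_simps)
lemma comm_mdiff_right: "comm n C (mdiff A B) = mdiff (comm n C A) (comm n C B)"
  by (intro ext) (simp add: comm_def sum_subtractf[symmetric] algebra_simps)
lemma comm_msc_left: "comm n (msc c A) C = msc c (comm n A C)"
  by (intro ext) (simp add: comm_def sum_distrib_left algebra_simps)
lemma comm_msc_right: "comm n C (msc c A) = msc c (comm n C A)"
  by (intro ext) (simp add: comm_def sum_distrib_left algebra_simps)
lemma comm_mzero_left [simp]: "comm n mzero C = mzero"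
  by (intro ext) (simp add: comm_def)
lemma comm_mzero_right [simp]: "comm n C mzero = mzero"
  by (intro ext) (simp add: comm_def)
lemma comm_swap: "comm n B A = msc (-1) (comm n A B)"
  by (intro ext) (simp add: comm_def sum_negf[symmetric] algebra_simps)
lemma comm_self [simp]: "comm n A A = mzero"
  by (intro ext) (simp add: comm_def)

lemma minner_madd_left: "minner n (madd A B) C = minner n A C + minner n B C"
  by (simp add: minner_def sum.distrib[symmetric] algebra_simps)
lemma minner_madd_right: "minner n C (madd A B) = minner n C A + minner n C B"
  by (simp add: minner_def sum.distrib[symmetric] algebra_simps)
lemma minner_mdiff_left: "minner n (mdiff A B) C = minner n A C - minner n B C"
  by (simp add: minner_def sum_subtractf[symmetric] algebra_simps)
lemma minner_mdiff_right: "minner n C (mdiff A B) = minner n C A - minner n C B"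
  by (simp add: minner_def sum_subtractf[symmetric] algebra_simps)
lemma minner_msc_left: "minner n (msc c A) C = c * minner n A C"
  by (simp add: minner_def sum_distrib_left algebra_simps)
lemma minner_msc_right: "minner n C (msc c A) = cnj c * minner n C A"
  by (simp add: minner_def sum_distrib_left algebra_simps)
lemma minner_mzero_left [simp]: "minner n mzero C = 0" by (simp add: minner_def)
lemma minner_mzero_right [simp]: "minner n C mzero = 0" by (simp add: minner_def)
lemma cnj_minner: "cnj (minner n A B) = minner n B A"
  by (simp add: minner_def mult.commute)

lemmas minner_linear = minner_madd_left minner_madd_right minner_mdiff_left minner_mdiff_right
  minner_msc_left minner_msc_right

lemma minner_self: "minner n X X = complex_of_real (\<Sum>a\<le>n. \<Sum>b\<le>n. (cmod (X a b))\<^sup>2)"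
  unfolding minner_def of_real_sum by (intro sum.cong refl complex_norm_square[symmetric])

lemma minner_self_eq_zero: assumes "X \<in> slg n" "minner n X X = 0" shows "X = mzero"
proof (intro ext)
  fix a b
  have sq: "(\<Sum>a\<le>n. \<Sum>b\<le>n. (cmod (X a b))\<^sup>2) = 0"
    using assms(2) by (simp only: minner_self of_real_eq_0_iff)
  show "X a b = mzero a b"
  proof (cases "a \<le> n \<and> b \<le> n")
    case True
    have "(\<Sum>b\<le>n. (cmod (X a b))\<^sup>2) = 0"
      using sq True by (subst (asm) sum_nonneg_eq_0_iff) (auto intro: sum_nonneg)
    hence "(cmod (X a b))\<^sup>2 = 0"
      using True by (subst (asm) sum_nonneg_eq_0_iff) auto
    thus ?thesis by simp
  next
    case False thus ?thesis using assms(1) by (auto simp: slg_def)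
  qed
qed

lemma prCI_madd: "prCI n (madd A B) = madd (prCI n A) (prCI n B)"
  by (intro ext) (simp add: prCI_def minner_madd_left algebra_simps)
lemma prCI_msc: "prCI n (msc c A) = msc c (prCI n A)"
  by (intro ext) (simp add: prCI_def minner_msc_left algebra_simps)
lemma prS_madd: "prS n (madd A B) = madd (prS n A) (prS n B)"
  by (intro ext) (simp add: prS_def)
lemma prS_msc: "prS n (msc c A) = msc c (prS n A)"
  by (intro ext) (simp add: prS_def)
lemma prSL_madd: "prSL n (madd A B) = madd (prSL n A) (prSL n B)"
  by (intro ext) (simp add: prSL_def prCI_madd prS_madd)
lemma prSL_msc: "prSL n (msc c A) = msc c (prSL n A)"
  by (intro ext) (simp add: prSL_def prCI_msc prS_msc algebra_simps)
lemma prCI_mzero [simp]: "prCI n mzero = mzero" by (intro ext) (simp add: prCI_def)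
lemma prS_mzero [simp]: "prS n mzero = mzero" by (intro ext) (simp add: prS_def)
lemma prSL_mzero [simp]: "prSL n mzero = mzero" by (intro ext) (simp add: prSL_def)

lemmas bracket_linear = comm_madd_left comm_madd_right comm_msc_left comm_msc_right
  prCI_madd prCI_msc prS_madd prS_msc prSL_madd prSL_msc

lemma minner_prCI: "minner n (prCI n X) Y = minner n X (Iden n) * minner n (Iden n) Y"
  by (simp add: prCI_def minner_msc_left)

lemma prCI_adjoint: "minner n (prCI n X) Y = minner n X (prCI n Y)"
proof -
  have "minner n (prCI n X) Y = minner n X (Iden n) * cnj (minner n Y (Iden n))"
    by (simp add: minner_prCI cnj_minner)
  thus ?thesis by (simp add: prCI_def minner_msc_right mult.commute)
qed

lemma prS_adjoint: "minner n (prS n X) Y = minner n X (prS n Y)"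
  unfolding minner_def by (intro sum.cong refl) (simp add: prS_def)

lemma minner_prS_prS: "minner n (prS n X) Y = minner n (prS n X) (prS n Y)"
  unfolding minner_def by (intro sum.cong refl) (simp add: prS_def)


section \<open>The decomposition $\mathfrak{sl}_{n+1} = \mathfrak{sl}_n \oplus \mathbb{C}I \oplus \mathfrak{s}$\<close>

definition supported :: "nat \<Rightarrow> cmat \<Rightarrow> bool" where
  "supported n M \<longleftrightarrow> (\<forall>a b. (n < a \<or> n < b) \<longrightarrow> M a b = 0)"

definition sl_block :: "nat \<Rightarrow> cmat \<Rightarrow> bool" where
  "sl_block n M \<longleftrightarrow> (\<forall>a b. \<not> (a < n \<and> b < n) \<longrightarrow> M a b = 0)"

definition s_block :: "nat \<Rightarrow> cmat \<Rightarrow> bool" where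
  "s_block n M \<longleftrightarrow> (\<forall>a b. \<not> ((a < n \<and> b = n) \<or> (a = n \<and> b < n)) \<longrightarrow> M a b = 0)"

definition diagonal :: "cmat \<Rightarrow> bool" where
  "diagonal M \<longleftrightarrow> (\<forall>a b. a \<noteq> b \<longrightarrow> M a b = 0)"

lemma slg_iff: "X \<in> slg n \<longleftrightarrow> supported n X \<and> mtrace n X = 0"
  by (auto simp: slg_def supported_def)

lemma slg_supported: "X \<in> slg n \<Longrightarrow> supported n X"
  by (simp add: slg_iff)

lemma s_block_supported: "s_block n X \<Longrightarrow> supported n X"
  by (auto simp: s_block_def supported_def)

lemma s_block_prS: "s_block n (prS n X)" by (simp add: s_block_def prS_def)
lemma diagonal_prCI: "diagonal (prCI n X)" by (simp add: prCI_def diagonal_def Iden_def)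

lemma supported_prS: "supported n (prS n M)" by (rule s_block_supported[OF s_block_prS])
lemma supported_prCI: "supported n (prCI n M)" by (simp add: supported_def prCI_def Iden_apply)
lemma supported_prSL: "supported n M \<Longrightarrow> supported n (prSL n M)"
  using supported_prS[of n M] supported_prCI[of n M] by (simp add: supported_def prSL_def)

lemma sl_block_prSL: assumes X: "X \<in> slg n" and n: "n \<ge> 1" shows "sl_block n (prSL n X)"
  unfolding sl_block_def
proof (intro allI impI)
  fix a b assume ab: "\<not> (a < n \<and> b < n)"
  show "prSL n X a b = 0"
  proof (cases "a = n \<and> b = n")
    case True
    have "prSL n X a b = X n n - (- Iscale n * (of_nat n + 1) * X n n) * (Iscale n * (- of_nat n))"
      using True by (simp add: prSL_def prCI_def prS_def minner_Iden_slg[OF X] Iden_apply)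
    also have "\<dots> = X n n - (Iscale n * Iscale n * (of_nat n * (of_nat n + 1))) * X n n"
      by (simp add: algebra_simps)
    finally show ?thesis using n by (simp add: Iscale_sq)
  next
    case False
    then show ?thesis using ab X by (auto simp: prSL_def prCI_def prS_def Iden_apply slg_def)
  qed
qed

lemma sl_block_comm: assumes "sl_block n A" "sl_block n B" shows "sl_block n (comm n A B)"
  unfolding sl_block_def comm_apply
proof (intro allI impI sum.neutral ballI)
  fix a b c assume "\<not> (a < n \<and> b < n)"
  with assms have "A a c * B c b = 0" "B a c * A c b = 0"
    unfolding sl_block_def by (cases "a < n \<and> c < n"; auto)+
  thus "A a c * B c b - B a c * A c b = 0" by (metis diff_self)
qed

lemma s_block_comm_sl_block: assumes "sl_block n A" "s_block n B" shows "s_block n (comm n A B)"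
  unfolding s_block_def comm_apply
proof (intro allI impI sum.neutral ballI)
  fix a b c assume "\<not> ((a < n \<and> b = n) \<or> (a = n \<and> b < n))"
  with assms have "A a c * B c b = 0" "B a c * A c b = 0"
    unfolding sl_block_def s_block_def by (cases "a < n \<and> c < n"; cases "c < n \<and> b < n"; auto)+
  thus "A a c * B c b - B a c * A c b = 0" by (metis diff_self)
qed

lemma s_block_comm_diagonal: assumes "diagonal A" "s_block n B" shows "s_block n (comm n A B)"
  unfolding s_block_def comm_apply
proof (intro allI impI sum.neutral ballI)
  fix a b c assume "\<not> ((a < n \<and> b = n) \<or> (a = n \<and> b < n))"
  with assms have "A a c * B c b = 0" "B a c * A c b = 0"
    unfolding diagonal_def s_block_def by (cases "a = c"; cases "c = b"; auto)+
  thus "A a c * B c b - B a c * A c b = 0" by (metis diff_self)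
qed

lemma s_block_swap: "s_block n (comm n A B) \<Longrightarrow> s_block n (comm n B A)"
  by (subst comm_swap) (simp add: s_block_def)

lemma comm_diagonal: assumes "diagonal A" "diagonal B" shows "comm n A B = mzero"
proof (intro ext)
  fix a b
  show "comm n A B a b = mzero a b"
    unfolding comm_apply mzero_apply
  proof (intro sum.neutral ballI)
    fix c show "A a c * B c b - B a c * A c b = 0"
      using assms unfolding diagonal_def by (cases "a = c"; cases "c = b") auto
  qed
qed

lemma comm_sl_block_Iden: assumes A: "sl_block n A" shows "comm n A (Iden n) = mzero"
proof (intro ext)
  fix a b
  have right: "(\<Sum>c\<le>n. A a c * Iden n c b) = (if b \<le> n then A a b * Iden n b b else 0)"
    by (subst sum.cong[OF refl, where h = "\<lambda>c. if c = b then A a b * Iden n b b else 0"])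
       (auto simp: Iden_apply)
  have left: "(\<Sum>c\<le>n. Iden n a c * A c b) = (if a \<le> n then Iden n a a * A a b else 0)"
    by (subst sum.cong[OF refl, where h = "\<lambda>c. if c = a then Iden n a a * A a b else 0"])
       (auto simp: Iden_apply)
  show "comm n A (Iden n) a b = mzero a b"
  proof (cases "a < n \<and> b < n")
    case True
    thus ?thesis unfolding comm_apply sum_subtractf left right by (simp add: Iden_apply)
  next
    case False
    hence "A a b = 0" using A by (simp add: sl_block_def)
    thus ?thesis unfolding comm_apply sum_subtractf left right by simp
  qed
qed

lemma prS_sl_block: "sl_block n M \<Longrightarrow> prS n M = mzero"
  by (intro ext) (auto simp: sl_block_def prS_def)
lemma prS_diagonal: "diagonal M \<Longrightarrow> prS n M = mzero"
  by (intro ext) (auto simp: diagonal_def prS_def)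
lemma prS_s_block: "s_block n M \<Longrightarrow> prS n M = M"
  by (intro ext) (auto simp: s_block_def prS_def)
lemma prCI_s_block: "s_block n M \<Longrightarrow> prCI n M = mzero"
  by (intro ext) (auto simp: prCI_def minner_Iden s_block_def)
lemma prSL_s_block: "s_block n M \<Longrightarrow> prSL n M = mzero"
  by (intro ext) (simp add: prSL_def prCI_s_block prS_s_block)
lemma prSL_eq_self: "prCI n M = mzero \<Longrightarrow> prS n M = mzero \<Longrightarrow> prSL n M = M"
  by (intro ext) (simp add: prSL_def)

lemma mtrace_comm: "mtrace n (comm n A B) = 0"
proof -
  have "mtrace n (comm n A B) = (\<Sum>a\<le>n. \<Sum>c\<le>n. A a c * B c a) - (\<Sum>a\<le>n. \<Sum>c\<le>n. B a c * A c a)"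
    by (simp add: mtrace_def comm_def sum_subtractf)
  also have "(\<Sum>a\<le>n. \<Sum>c\<le>n. B a c * A c a) = (\<Sum>a\<le>n. \<Sum>c\<le>n. A a c * B c a)"
    by (subst sum.swap) (simp add: mult.commute)
  finally show ?thesis by simp
qed

lemma prCI_comm_sl_block: assumes "sl_block n A" "sl_block n B" shows "prCI n (comm n A B) = mzero"
proof -
  have nn: "comm n A B n n = 0" using sl_block_comm[OF assms] by (simp add: sl_block_def)
  have "(\<Sum>a<n. comm n A B a a) = 0" using mtrace_comm[of n A B] nn by (simp add: mtrace_split)
  thus ?thesis using nn by (intro ext) (simp add: prCI_def minner_Iden)
qed

lemma prS_comm_s_block: assumes A: "s_block n A" and B: "s_block n B" shows "prS n (comm n A B) = mzero"
proof (intro ext)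
  fix a b
  show "prS n (comm n A B) a b = mzero a b"
  proof (cases "(a < n \<and> b = n) \<or> (a = n \<and> b < n)")
    case True
    have "comm n A B a b = 0" unfolding comm_apply
    proof (intro sum.neutral ballI)
      fix c
      have "A a c * B c b = 0" "B a c * A c b = 0"
        using A B True unfolding s_block_def by (cases "c = n"; auto)+
      thus "A a c * B c b - B a c * A c b = 0" by (metis diff_self)
    qed
    thus ?thesis by (simp add: prS_def)
  next
    case False thus ?thesis by (auto simp: prS_def)
  qed
qed

lemma prCI_prCI: "n \<ge> 1 \<Longrightarrow> prCI n (prCI n M) = prCI n M"
  by (simp add: prCI_def minner_msc_left minner_Iden_Iden)
lemma prS_prCI: "prS n (prCI n M) = mzero" by (rule prS_diagonal[OF diagonal_prCI])
lemma prS_prS: "prS n (prS n M) = prS n M" by (rule prS_s_block[OF s_block_prS])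
lemma prSL_prS: "prSL n (prS n M) = mzero" by (rule prSL_s_block[OF s_block_prS])
lemma prSL_prCI: "n \<ge> 1 \<Longrightarrow> prSL n (prCI n M) = mzero"
  by (intro ext) (simp add: prSL_def prCI_prCI prS_prCI)

lemma slg_comm: "supported n A \<Longrightarrow> supported n B \<Longrightarrow> comm n A B \<in> slg n"
  by (auto simp: slg_iff mtrace_comm supported_def comm_apply)
lemma slg_madd: "X \<in> slg n \<Longrightarrow> Y \<in> slg n \<Longrightarrow> madd X Y \<in> slg n"
  by (simp add: slg_def mtrace_def sum.distrib)
lemma slg_mdiff: "X \<in> slg n \<Longrightarrow> Y \<in> slg n \<Longrightarrow> mdiff X Y \<in> slg n"
  by (simp add: slg_def mtrace_def sum_subtractf)
lemma slg_msc: "X \<in> slg n \<Longrightarrow> msc c X \<in> slg n"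
  by (simp add: slg_def mtrace_def sum_distrib_left[symmetric])
lemma slg_Iden: "Iden n \<in> slg n"
  by (simp add: slg_def mtrace_def Iden_apply sum_atMost_last)
lemma slg_prCI: "prCI n X \<in> slg n"
  by (simp add: prCI_def slg_msc slg_Iden)
lemma slg_prS: "prS n X \<in> slg n"
proof -
  have "mtrace n (prS n X) = 0" unfolding mtrace_def prS_def by (rule sum.neutral) auto
  thus ?thesis by (simp add: slg_iff supported_prS)
qed
lemma slg_prSL: "X \<in> slg n \<Longrightarrow> prSL n X \<in> slg n"
  unfolding prSL_def by (intro slg_mdiff slg_prCI slg_prS)


section \<open>The brackets $\mu_{y,z}$ and their limit\<close>

lemma comm_sl_block_prCI: "sl_block n A \<Longrightarrow> comm n A (prCI n Y) = mzero"
  by (simp add: prCI_def comm_msc_right comm_sl_block_Iden)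

lemma comm_prCI_sl_block: "sl_block n B \<Longrightarrow> comm n (prCI n X) B = mzero"
  by (subst comm_swap) (simp add: comm_sl_block_prCI)

lemma block_brackets:
  assumes n: "n \<ge> 1" and X: "X \<in> slg n" and Y: "Y \<in> slg n"
  shows "comm n (prSL n X) (prCI n Y) = mzero"
    and "comm n (prCI n X) (prSL n Y) = mzero"
    and "comm n (prCI n X) (prCI n Y) = mzero"
    and "prCI n (comm n (prSL n X) (prSL n Y)) = mzero"
    and "prS n (comm n (prSL n X) (prSL n Y)) = mzero"
    and "prSL n (comm n (prSL n X) (prSL n Y)) = comm n (prSL n X) (prSL n Y)"
    and "prS n (comm n (prS n X) (prS n Y)) = mzero"
    and "s_block n (comm n (prSL n X) (prS n Y))"
    and "s_block n (comm n (prS n X) (prSL n Y))"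
    and "s_block n (comm n (prCI n X) (prS n Y))"
    and "s_block n (comm n (prS n X) (prCI n Y))"
proof -
  have sX: "sl_block n (prSL n X)" and sY: "sl_block n (prSL n Y)"
    using sl_block_prSL n X Y by auto
  show "comm n (prSL n X) (prCI n Y) = mzero" "comm n (prCI n X) (prSL n Y) = mzero"
    using sX sY by (simp_all add: comm_sl_block_prCI comm_prCI_sl_block)
  show "comm n (prCI n X) (prCI n Y) = mzero" by (rule comm_diagonal[OF diagonal_prCI diagonal_prCI])
  show cX: "prCI n (comm n (prSL n X) (prSL n Y)) = mzero" by (rule prCI_comm_sl_block[OF sX sY])
  show sXY: "prS n (comm n (prSL n X) (prSL n Y)) = mzero" by (rule prS_sl_block[OF sl_block_comm[OF sX sY]])
  show "prSL n (comm n (prSL n X) (prSL n Y)) = comm n (prSL n X) (prSL n Y)" by (rule prSL_eq_self[OF cX sXY])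
  show "prS n (comm n (prS n X) (prS n Y)) = mzero" by (rule prS_comm_s_block[OF s_block_prS s_block_prS])
  show "s_block n (comm n (prSL n X) (prS n Y))" by (rule s_block_comm_sl_block[OF sX s_block_prS])
  show "s_block n (comm n (prS n X) (prSL n Y))"
    by (rule s_block_swap[OF s_block_comm_sl_block[OF sY s_block_prS]])
  show "s_block n (comm n (prCI n X) (prS n Y))" by (rule s_block_comm_diagonal[OF diagonal_prCI s_block_prS])
  show "s_block n (comm n (prS n X) (prCI n Y))"
    by (rule s_block_swap[OF s_block_comm_diagonal[OF diagonal_prCI s_block_prS]])
qed

definition bracket_fixed :: "nat \<Rightarrow> cmat \<Rightarrow> cmat \<Rightarrow> cmat" where
  "bracket_fixed n X Y = madd (comm n (prSL n X) (prSL n Y))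
     (madd (comm n (prSL n X) (prS n Y)) (comm n (prS n X) (prSL n Y)))"

definition bracket_CI_s :: "nat \<Rightarrow> cmat \<Rightarrow> cmat \<Rightarrow> cmat" where
  "bracket_CI_s n X Y = madd (comm n (prCI n X) (prS n Y)) (comm n (prS n X) (prCI n Y))"

definition bracket_s_s_sl :: "nat \<Rightarrow> cmat \<Rightarrow> cmat \<Rightarrow> cmat" where
  "bracket_s_s_sl n X Y = prSL n (comm n (prS n X) (prS n Y))"

definition bracket_s_s_CI :: "nat \<Rightarrow> cmat \<Rightarrow> cmat \<Rightarrow> cmat" where
  "bracket_s_s_CI n X Y = prCI n (comm n (prS n X) (prS n Y))"

lemma mu_yz_components:
  assumes n: "n \<ge> 1" and X: "X \<in> slg n" and Y: "Y \<in> slg n" and y: "y > 0" and z: "z > 0"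
  shows "mu_yz n y z X Y a b = bracket_fixed n X Y a b + complex_of_real (sqrt y) * bracket_CI_s n X Y a b
      + complex_of_real z * bracket_s_s_sl n X Y a b + complex_of_real (z / sqrt y) * bracket_s_s_CI n X Y a b"
proof -
  have pow: "y powr (1/2) = sqrt y" "y powr (-1/2) = 1 / sqrt y"
      "z powr (1/2) = sqrt z" "z powr (-1/2) = 1 / sqrt z"
    using y z by (simp_all add: powr_half_sqrt powr_minus_divide)
  have nz: "complex_of_real (sqrt z) \<noteq> 0" "complex_of_real (sqrt y) \<noteq> 0" using y z by auto
  have zz: "complex_of_real z = complex_of_real (sqrt z) * complex_of_real (sqrt z)"
    using z by (simp flip: of_real_mult)
  show ?thesis
    unfolding mu_yz_def hmap_def hinv_def pow using y z
    by (simp only: bracket_linear block_brackets[OF n X Y] prCI_s_block prSL_s_block prS_s_block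
        msc_mzero madd_mzero_left madd_mzero_right comm_mzero_left comm_mzero_right
        prCI_mzero prS_mzero prSL_mzero)
      (simp add: bracket_fixed_def bracket_CI_s_def bracket_s_s_sl_def bracket_s_s_CI_def,
       simp add: field_simps nz zz)
qed

lemma mu_inf_components:
  "mu_inf n X Y a b = bracket_fixed n X Y a b
    + complex_of_real (sqrt ((real n ^ 2 - 2) / (real n * (real n + 1)))) * bracket_s_s_CI n X Y a b"
  by (simp add: mu_inf_def bracket_fixed_def bracket_s_s_CI_def)

lemma mu_yz_tendsto_mu_inf:
  assumes n: "n \<ge> 1" and X: "X \<in> slg n" and Y: "Y \<in> slg n"
    and pos: "\<forall>\<^sub>F t in F. y t > 0 \<and> z t > 0"
    and y: "(y \<longlongrightarrow> 0) F" and z: "(z \<longlongrightarrow> 0) F"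
    and ratio: "((\<lambda>t. z t / sqrt (y t)) \<longlongrightarrow> sqrt ((real n ^ 2 - 2) / (real n * (real n + 1)))) F"
  shows "((\<lambda>t. mu_yz n (y t) (z t) X Y a b) \<longlongrightarrow> mu_inf n X Y a b) F"
proof -
  let ?k = "sqrt ((real n ^ 2 - 2) / (real n * (real n + 1)))"
  let ?e = "\<lambda>t. bracket_fixed n X Y a b + complex_of_real (sqrt (y t)) * bracket_CI_s n X Y a b
      + complex_of_real (z t) * bracket_s_s_sl n X Y a b
      + complex_of_real (z t / sqrt (y t)) * bracket_s_s_CI n X Y a b"
  have "(?e \<longlongrightarrow> bracket_fixed n X Y a b + complex_of_real 0 * bracket_CI_s n X Y a b
      + complex_of_real 0 * bracket_s_s_sl n X Y a b + complex_of_real ?k * bracket_s_s_CI n X Y a b) F"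
    using tendsto_real_sqrt[OF y] by (intro tendsto_intros z ratio) simp
  hence "(?e \<longlongrightarrow> mu_inf n X Y a b) F" by (simp add: mu_inf_components)
  moreover have "\<forall>\<^sub>F t in F. ?e t = mu_yz n (y t) (z t) X Y a b"
    using pos by eventually_elim (simp add: mu_yz_components[OF n X Y])
  ultimately show ?thesis by (rule Lim_transform_eventually)
qed

section \<open>Asymptotics of the ODE\<close>

lemma stays_le_if_deriv_neg_above:
  fixes f f' :: "real \<Rightarrow> real"
  assumes der: "\<And>t. t \<ge> t0 \<Longrightarrow> (f has_real_derivative f' t) (at t)"
    and dec: "\<And>t. t \<ge> t0 \<Longrightarrow> f t > c \<Longrightarrow> f' t < 0"
    and start: "f t0 \<le> c" and t: "t \<ge> t0"
  shows "f t \<le> c"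
proof (rule ccontr)
  assume "\<not> f t \<le> c"
  have cont: "continuous_on {t0..t} f"
    by (intro continuous_at_imp_continuous_on ballI DERIV_isCont[OF der]) auto
  obtain m where m: "m \<in> {t0..t}" "\<And>s. s \<in> {t0..t} \<Longrightarrow> f s \<le> f m"
    using continuous_attains_sup[OF compact_Icc _ cont] t by auto
  have fm: "f m > c" using m(2)[of t] t \<open>\<not> f t \<le> c\<close> by auto
  hence mt0: "m > t0" using m(1) start by (cases "m = t0") auto
  have "f' m < 0" using dec[of m] fm m(1) by auto
  then obtain d where d: "d > 0" "\<And>h. h > 0 \<Longrightarrow> h < d \<Longrightarrow> f m < f (m - h)"
    using DERIV_neg_dec_left[OF der[of m]] m(1) by auto
  define h where "h = min (d/2) (m - t0)"
  have "f m < f (m - h)" using d mt0 by (intro d(2)) (auto simp: h_def)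
  moreover have "m - h \<in> {t0..t}" using m(1) mt0 d by (auto simp: h_def)
  ultimately show False using m(2) by force
qed

lemma eventually_le_if_deriv_neg_above:
  fixes f f' :: "real \<Rightarrow> real"
  assumes der: "\<And>t. t \<ge> T \<Longrightarrow> (f has_real_derivative f' t) (at t)"
    and eta: "\<eta> > 0"
    and dec: "\<And>t. t \<ge> T \<Longrightarrow> f t > c \<Longrightarrow> f' t \<le> - \<eta>"
  shows "\<exists>T'. \<forall>t\<ge>T'. f t \<le> c"
proof -
  obtain t0 where t0: "t0 \<ge> T" "f t0 \<le> c"
  proof (rule ccontr)
    assume "\<not> thesis"
    with that have above: "\<And>t. t \<ge> T \<Longrightarrow> f t > c" by force
    define t where "t = T + \<bar>f T - c\<bar> / \<eta> + 1"
    have "\<bar>f T - c\<bar> / \<eta> \<ge> 0" using eta by simp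
    hence Tt: "T < t" by (simp add: t_def)
    obtain \<xi> where xi: "T < \<xi>" "\<xi> < t" "f t - f T = (t - T) * f' \<xi>"
      using MVT2[OF Tt, of f f'] der by auto
    have "f' \<xi> \<le> - \<eta>" using dec[of \<xi>] above[of \<xi>] xi by auto
    hence "(t - T) * f' \<xi> \<le> (t - T) * (- \<eta>)" using Tt by (intro mult_left_mono) auto
    also have "\<dots> = - \<bar>f T - c\<bar> - \<eta>" using eta by (simp add: t_def field_simps)
    finally have "f t < c" using xi eta by linarith
    thus False using above[of t] Tt by auto
  qed
  have "f t \<le> c" if "t \<ge> t0" for t
  proof (rule stays_le_if_deriv_neg_above[of t0 f f' c])
    fix s assume "s \<ge> t0"
    thus "(f has_real_derivative f' s) (at s)" using der t0 by auto
    assume "f s > c"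
    thus "f' s < 0" using dec[of s] \<open>s \<ge> t0\<close> t0 eta by force
  qed (use t0 that in auto)
  thus ?thesis by blast
qed

lemma linear_ode_eventually_small:
  fixes u e b :: "real \<Rightarrow> real"
  assumes der: "\<And>t. t \<ge> T \<Longrightarrow> (u has_real_derivative (e t - b t * u t)) (at t)"
    and e: "\<And>t. t \<ge> T \<Longrightarrow> \<bar>e t\<bar> < \<beta> * \<delta> / 4" and b: "\<And>t. t \<ge> T \<Longrightarrow> b t > \<beta> / 2"
    and \<beta>: "\<beta> > 0" and \<delta>: "\<delta> > 0"
  shows "\<forall>\<^sub>F t in at_top. \<bar>u t\<bar> \<le> \<delta>"
proof -
  have \<beta>\<delta>: "\<beta> * \<delta> / 4 > 0" using \<beta> \<delta> by simp
  have "\<exists>T'. \<forall>t\<ge>T'. u t \<le> \<delta>"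
  proof (rule eventually_le_if_deriv_neg_above[OF der \<beta>\<delta>])
    fix t assume t: "t \<ge> T" "u t > \<delta>"
    have "b t * u t \<ge> (\<beta>/2) * \<delta>" using t b[OF t(1)] \<beta> \<delta> by (intro mult_mono) auto
    thus "e t - b t * u t \<le> - (\<beta> * \<delta> / 4)" using e[OF t(1)] by linarith
  qed
  moreover have "\<exists>T'. \<forall>t\<ge>T'. - u t \<le> \<delta>"
  proof (rule eventually_le_if_deriv_neg_above[OF DERIV_minus[OF der] \<beta>\<delta>])
    fix t assume t: "t \<ge> T" "- u t > \<delta>"
    have "b t * (- u t) \<ge> (\<beta>/2) * \<delta>" using t b[OF t(1)] \<beta> \<delta> by (intro mult_mono) auto
    thus "- (e t - b t * u t) \<le> - (\<beta> * \<delta> / 4)" using e[OF t(1)] by linarith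
  qed
  ultimately obtain T1 T2 where "\<And>t. t \<ge> T1 \<Longrightarrow> u t \<le> \<delta>" "\<And>t. t \<ge> T2 \<Longrightarrow> - u t \<le> \<delta>"
    by blast
  thus ?thesis unfolding eventually_at_top_linorder
    by (intro exI[of _ "max T1 T2"]) (simp add: abs_le_iff)
qed

lemma linear_ode_tendsto:
  fixes w a b :: "real \<Rightarrow> real"
  assumes der: "\<And>t. t \<ge> T \<Longrightarrow> (w has_real_derivative (a t - b t * w t)) (at t)"
    and a: "(a \<longlongrightarrow> \<alpha>) at_top" and b: "(b \<longlongrightarrow> \<beta>) at_top" and \<beta>: "\<beta> > 0"
  shows "(w \<longlongrightarrow> \<alpha> / \<beta>) at_top"
proof -
  define u where "u t = w t - \<alpha> / \<beta>" for t
  define e where "e t = (a t - \<alpha>) - \<alpha> * (b t - \<beta>) / \<beta>" for t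
  have du: "(u has_real_derivative (e t - b t * u t)) (at t)" if "t \<ge> T" for t
  proof -
    have "(u has_real_derivative (a t - b t * w t - 0)) (at t)"
      unfolding u_def[abs_def] using der[OF that] by (intro derivative_intros)
    moreover have "a t - b t * w t - 0 = e t - b t * u t" using \<beta> by (simp add: u_def e_def field_simps)
    ultimately show ?thesis by simp
  qed
  have "(e \<longlongrightarrow> (\<alpha> - \<alpha>) - \<alpha> * (\<beta> - \<beta>) / \<beta>) at_top"
    unfolding e_def[abs_def] using \<beta> by (intro tendsto_intros a b) auto
  hence e0: "(e \<longlongrightarrow> 0) at_top" by simp
  have small: "\<forall>\<^sub>F t in at_top. \<bar>u t\<bar> \<le> \<delta>" if \<delta>: "\<delta> > 0" for \<delta>
  proof -
    have "\<forall>\<^sub>F t in at_top. \<bar>e t\<bar> < \<beta> * \<delta> / 4"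
      using e0[unfolded tendsto_iff, rule_format, of "\<beta> * \<delta> / 4"] \<beta> \<delta> by (simp add: dist_real_def)
    moreover have "\<forall>\<^sub>F t in at_top. b t > \<beta> / 2"
      using order_tendstoD(1)[OF b, of "\<beta> / 2"] \<beta> by simp
    ultimately have "\<forall>\<^sub>F t in at_top. \<bar>e t\<bar> < \<beta> * \<delta> / 4 \<and> b t > \<beta> / 2"
      by (rule eventually_conj)
    then obtain T1 where T1: "\<And>t. t \<ge> T1 \<Longrightarrow> \<bar>e t\<bar> < \<beta> * \<delta> / 4 \<and> b t > \<beta> / 2"
      unfolding eventually_at_top_linorder by blast
    show ?thesis
      by (rule linear_ode_eventually_small[of "max T T1" u e b \<beta>]) (use du T1 \<beta> \<delta> in force)+
  qed
  have "(u \<longlongrightarrow> 0) at_top"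
    unfolding tendsto_iff dist_real_def
  proof (intro allI impI)
    fix \<epsilon> :: real assume "\<epsilon> > 0"
    hence "\<forall>\<^sub>F t in at_top. \<bar>u t\<bar> \<le> \<epsilon>/2" by (intro small) simp
    thus "\<forall>\<^sub>F t in at_top. \<bar>u t - 0\<bar> < \<epsilon>" by eventually_elim (use \<open>\<epsilon> > 0\<close> in auto)
  qed
  hence "((\<lambda>t. u t + \<alpha> / \<beta>) \<longlongrightarrow> 0 + \<alpha> / \<beta>) at_top" by (intro tendsto_add tendsto_const)
  thus ?thesis by (simp add: u_def)
qed


lemma quotient_sq_has_derivative:
  fixes y z :: "real \<Rightarrow> real"
  assumes dy: "(y has_real_derivative ((z t)\<^sup>2 * (m + 1 - y t) - m * y t)) (at t)"
    and dz: "(z has_real_derivative (z t * r)) (at t)" and z: "z t \<noteq> 0"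
  shows "((\<lambda>s. y s / (z s)\<^sup>2) has_real_derivative ((m + 1 - y t) - (m + 2 * r) * (y t / (z t)\<^sup>2))) (at t)"
proof -
  have "((\<lambda>s. y s / (z s)\<^sup>2) has_real_derivative
      ((((z t)\<^sup>2 * (m + 1 - y t) - m * y t) * (z t)\<^sup>2 - y t * (2 * z t * (z t * r))) / ((z t)\<^sup>2 * (z t)\<^sup>2))) (at t)"
    using dy dz z by (auto intro!: derivative_eq_intros simp: power2_eq_square)
  moreover have "(((z t)\<^sup>2 * (m + 1 - y t) - m * y t) * (z t)\<^sup>2 - y t * (2 * z t * (z t * r)))
      / ((z t)\<^sup>2 * (z t)\<^sup>2) = (m + 1 - y t) - (m + 2 * r) * (y t / (z t)\<^sup>2)"
    using z by (simp add: field_simps power2_eq_square)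
  ultimately show ?thesis by simp
qed

text \<open>The quotient $w = y/z^2$ satisfies the linear equation $w' = (n+1-y) - (n + 2\dot z/z)\,w$,
  whose coefficients tend to $n+1$ and $n - 2/n > 0$.\<close>

lemma ode_ratio_tendsto:
  fixes n :: nat and y z :: "real \<Rightarrow> real"
  assumes n2: "n \<ge> 2"
    and pos: "\<And>t. t \<ge> 0 \<Longrightarrow> y t > 0 \<and> z t > 0"
    and ode_y: "\<And>t. t \<ge> 0 \<Longrightarrow>
        (y has_real_derivative ((z t)\<^sup>2 * (real n + 1 - y t) - real n * y t)) (at t within {0..})"
    and ode_z: "\<And>t. t \<ge> 0 \<Longrightarrow>
        (z has_real_derivative ((real n + 1) / real n * z t * (real n - 1 + y t) - (real n + (z t)\<^sup>2) * z t))
          (at t within {0..})"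
    and y0: "(y \<longlongrightarrow> 0) at_top"
    and z0: "(z \<longlongrightarrow> 0) at_top"
  shows "((\<lambda>t. z t / sqrt (y t)) \<longlongrightarrow> sqrt ((real n ^ 2 - 2) / (real n * (real n + 1)))) at_top"
proof -
  have nr: "real n \<ge> 2" using n2 by simp
  define r where "r t = (real n + 1) / real n * (real n - 1 + y t) - (real n + (z t)\<^sup>2)" for t
  define w where "w t = y t / (z t)\<^sup>2" for t
  have dw: "(w has_real_derivative ((real n + 1 - y t) - (real n + 2 * r t) * w t)) (at t)"
    if t: "t \<ge> 1" for t
  proof -
    have at: "at t within {0..} = at t" using t by (intro at_within_interior) simp
    have "(z has_real_derivative (z t * r t)) (at t)"
      using ode_z[of t] t unfolding at by (simp add: r_def algebra_simps)
    with ode_y[of t] pos[of t] t show ?thesis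
      unfolding at w_def[abs_def] by (intro quotient_sq_has_derivative) auto
  qed
  have "((\<lambda>t. real n + 1 - y t) \<longlongrightarrow> real n + 1 - 0) at_top" by (intro tendsto_intros y0)
  moreover have "((\<lambda>t. real n + 2 * r t) \<longlongrightarrow>
      real n + 2 * ((real n + 1) / real n * (real n - 1 + 0) - (real n + 0\<^sup>2))) at_top"
    unfolding r_def by (intro tendsto_intros y0 z0)
  moreover have "real n + 2 * ((real n + 1) / real n * (real n - 1 + 0) - (real n + 0\<^sup>2)) = real n - 2 / real n"
    using nr by (simp add: field_simps power2_eq_square)
  moreover have pos_lim: "real n - 2 / real n > 0"
  proof -
    have "2 / real n \<le> 1" using nr by simp
    thus ?thesis using nr by linarith
  qed
  ultimately have "(w \<longlongrightarrow> (real n + 1 - 0) / (real n - 2 / real n)) at_top"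
    using linear_ode_tendsto[OF dw] by simp
  hence "((\<lambda>t. sqrt (inverse (w t))) \<longlongrightarrow> sqrt (inverse ((real n + 1) / (real n - 2 / real n)))) at_top"
    using pos_lim nr by (intro tendsto_intros) auto
  moreover have "sqrt (inverse ((real n + 1) / (real n - 2 / real n)))
      = sqrt ((real n ^ 2 - 2) / (real n * (real n + 1)))"
    using nr by (simp add: field_simps power2_eq_square)
  moreover have "\<forall>\<^sub>F t in at_top. sqrt (inverse (w t)) = z t / sqrt (y t)"
    unfolding eventually_at_top_linorder
  proof (intro exI[of _ 0] allI impI)
    fix t :: real assume "t \<ge> 0"
    hence "y t > 0" "z t > 0" using pos by auto
    thus "sqrt (inverse (w t)) = z t / sqrt (y t)" by (simp add: w_def power_divide real_sqrt_divide)
  qed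
  ultimately show ?thesis by (auto elim: Lim_transform_eventually)
qed


section \<open>Unitary bases\<close>

lemma slg_sum: assumes "finite K" "\<And>k. k \<in> K \<Longrightarrow> f k \<in> slg n"
  shows "(\<lambda>a b. \<Sum>k\<in>K. c k * f k a b) \<in> slg n"
proof -
  have "supported n (\<lambda>a b. \<Sum>k\<in>K. c k * f k a b)"
    using assms(2) by (auto simp: slg_def supported_def intro!: sum.neutral)
  moreover have "mtrace n (\<lambda>a b. \<Sum>k\<in>K. c k * f k a b) = (\<Sum>k\<in>K. c k * mtrace n (f k))"
    by (simp add: mtrace_def sum_distrib_left) (rule sum.swap)
  ultimately show ?thesis using assms(2) by (simp add: slg_iff)
qed

lemma minner_sum_left: "minner n (\<lambda>a b. \<Sum>k\<in>K. c k * f k a b) Y = (\<Sum>k\<in>K. c k * minner n (f k) Y)"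
proof -
  have "minner n (\<lambda>a b. \<Sum>k\<in>K. c k * f k a b) Y = (\<Sum>a\<le>n. \<Sum>b\<le>n. \<Sum>k\<in>K. c k * f k a b * cnj (Y a b))"
    by (simp add: minner_def sum_distrib_right)
  also have "\<dots> = (\<Sum>k\<in>K. \<Sum>a\<le>n. \<Sum>b\<le>n. c k * f k a b * cnj (Y a b))"
    by (subst sum.swap, subst (2) sum.swap) simp
  also have "\<dots> = (\<Sum>k\<in>K. c k * minner n (f k) Y)"
    by (simp add: minner_def sum_distrib_left mult.assoc)
  finally show ?thesis .
qed

lemma minner_sum_right: "minner n Y (\<lambda>a b. \<Sum>k\<in>K. c k * f k a b) = (\<Sum>k\<in>K. cnj (c k) * minner n Y (f k))"
  by (subst cnj_minner[symmetric]) (simp add: minner_sum_left cnj_minner)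

definition lincomb :: "(nat \<Rightarrow> complex) \<Rightarrow> cmat list \<Rightarrow> cmat" where
  "lincomb c L = (\<lambda>a b. \<Sum>i<length L. c i * (L!i) a b)"

definition orthonormal :: "nat \<Rightarrow> cmat list \<Rightarrow> bool" where
  "orthonormal n B \<longleftrightarrow>
     (\<forall>i<length B. \<forall>j<length B. minner n (B!i) (B!j) = (if i = j then 1 else 0))"

lemma lincomb_append: "lincomb c (L @ [e]) = madd (lincomb c L) (msc (c (length L)) e)"
  by (intro ext) (simp add: lincomb_def nth_append)

lemma lincomb_cong: "(\<And>i. i < length L \<Longrightarrow> c i = d i) \<Longrightarrow> lincomb c L = lincomb d L"
  unfolding lincomb_def by (intro ext sum.cong) auto

lemma minner_lincomb_orthonormal:
  assumes "orthonormal n B" "k < length B"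
  shows "minner n (lincomb c B) (B!k) = c k"
proof -
  have "minner n (lincomb c B) (B!k) = (\<Sum>i<length B. c i * (if i = k then 1 else 0))"
    unfolding lincomb_def minner_sum_left using assms by (intro sum.cong) (auto simp: orthonormal_def)
  also have "\<dots> = c k" using assms(2) by (simp add: if_distrib cong: if_cong)
  finally show ?thesis .
qed

lemma orthonormal_snoc:
  assumes B: "orthonormal n B" and eB: "\<And>k. k < length B \<Longrightarrow> minner n e (B!k) = 0"
    and ee: "minner n e e = 1"
  shows "orthonormal n (B @ [e])"
  unfolding orthonormal_def
proof (intro allI impI)
  fix i j assume ij: "i < length (B @ [e])" "j < length (B @ [e])"
  have eB': "minner n (B!k) e = 0" if "k < length B" for k
    using eB[OF that] cnj_minner[of n e "B!k"] by simp
  consider "i < length B" "j < length B" | "i < length B" "j = length B"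
    | "i = length B" "j < length B" | "i = length B" "j = length B"
    using ij by fastforce
  thus "minner n ((B @ [e])!i) ((B @ [e])!j) = (if i = j then 1 else 0)"
    by cases (use B eB eB' ee in \<open>simp_all add: nth_append orthonormal_def\<close>)
qed

lemma lincomb_append_zero: "lincomb (\<lambda>i. if i < length L then c i else 0) (L @ [e]) = lincomb c L"
  unfolding lincomb_append by (subst lincomb_cong[of L _ c]) (simp_all add: fun_eq_iff)

lemma normalizing_factor:
  assumes w: "w \<in> slg n" "w \<noteq> mzero"
  obtains c where "c \<noteq> 0" "minner n (msc c w) (msc c w) = 1"
proof -
  define N where "N = (\<Sum>a\<le>n. \<Sum>b\<le>n. (cmod (w a b))\<^sup>2)"
  have wwN: "minner n w w = complex_of_real N" unfolding N_def by (rule minner_self)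
  have "N \<noteq> 0" using w minner_self_eq_zero wwN by auto
  moreover have "N \<ge> 0" unfolding N_def by (intro sum_nonneg) simp
  ultimately have "N > 0" by simp
  hence "complex_of_real (1 / sqrt N) * complex_of_real (1 / sqrt N) * complex_of_real N = 1"
    by (simp flip: of_real_mult add: field_simps)
  with \<open>N > 0\<close> show ?thesis
    by (intro that[of "complex_of_real (1 / sqrt N)"]) (simp_all add: minner_msc_left minner_msc_right wwN)
qed

lemma gram_schmidt:
  "set S \<subseteq> slg n \<Longrightarrow> \<exists>B. set B \<subseteq> slg n \<and> orthonormal n B \<and> (\<forall>v\<in>set S. \<exists>c. v = lincomb c B)"
proof (induction S)
  case Nil
  show ?case by (rule exI[of _ "[]"]) (simp add: orthonormal_def)
next
  case (Cons v S)
  then obtain B where B: "set B \<subseteq> slg n" "orthonormal n B" "\<forall>u\<in>set S. \<exists>c. u = lincomb c B" by auto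
  have v: "v \<in> slg n" using Cons.prems by auto
  define cv where "cv j = minner n v (B!j)" for j
  define w where "w = mdiff v (lincomb cv B)"
  have w: "w \<in> slg n"
    unfolding w_def lincomb_def using B(1) by (intro slg_mdiff v slg_sum) auto
  show ?case
  proof (cases "w = mzero")
    case True
    hence "v = lincomb cv B" by (simp add: w_def fun_eq_iff)
    thus ?thesis using B by auto
  next
    case False
    then obtain c where c: "c \<noteq> 0" "minner n (msc c w) (msc c w) = 1"
      using normalizing_factor[OF w] by blast
    define e where "e = msc c w"
    have "minner n w (B!k) = 0" if "k < length B" for k
      using minner_lincomb_orthonormal[OF B(2) that, of cv] by (simp add: w_def minner_mdiff_left cv_def)
    hence on: "orthonormal n (B @ [e])"
      using c(2) by (intro orthonormal_snoc[OF B(2)]) (simp_all add: e_def minner_msc_left)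
    have "lincomb (\<lambda>i. if i < length B then cv i else 1 / c) (B @ [e]) = madd (lincomb cv B) (msc (1 / c) e)"
      unfolding lincomb_append by (subst lincomb_cong[of B _ cv]) simp_all
    also have "\<dots> = v" using c(1) by (simp add: e_def w_def fun_eq_iff)
    finally have "\<exists>c. v = lincomb c (B @ [e])" by metis
    moreover have "\<exists>c. u = lincomb c (B @ [e])" if "u \<in> set S" for u
      using B(3) that lincomb_append_zero by metis
    moreover have "e \<in> slg n" unfolding e_def by (rule slg_msc[OF w])
    ultimately show ?thesis using B(1) on by (intro exI[of _ "B @ [e]"]) auto
  qed
qed

definition Em :: "nat \<Rightarrow> nat \<Rightarrow> cmat" where
  "Em a b = (\<lambda>i j. if i = a \<and> j = b then 1 else 0)"

definition Idm :: "nat \<Rightarrow> cmat" where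
  "Idm n = (\<lambda>i j. if i = j \<and> i \<le> n then 1 else 0)"

lemma supported_Em: "a \<le> n \<Longrightarrow> b \<le> n \<Longrightarrow> supported n (Em a b)"
  by (auto simp: supported_def Em_def)

lemma supported_Idm: "supported n (Idm n)"
  by (simp add: supported_def Idm_def)

lemma mtrace_Em: "a \<le> n \<Longrightarrow> mtrace n (Em a b) = (if a = b then 1 else 0)"
  by (cases "a = b") (auto simp: mtrace_def Em_def intro!: sum.neutral)

lemma mtrace_Idm: "mtrace n (Idm n) = of_nat (n + 1)"
  by (simp add: mtrace_def Idm_def)

lemma expand_Em: assumes "supported n X" shows "X i j = (\<Sum>a\<le>n. \<Sum>b\<le>n. X a b * Em a b i j)"
proof (cases "i \<le> n \<and> j \<le> n")
  case True
  have "(\<Sum>a\<le>n. \<Sum>b\<le>n. X a b * Em a b i j) = (\<Sum>a\<le>n. if a = i then X i j else 0)"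
  proof (rule sum.cong[OF refl])
    fix a
    have "(\<Sum>b\<le>n. X a b * Em a b i j) = (\<Sum>b\<le>n. if b = j then (if a = i then X i j else 0) else 0)"
      by (intro sum.cong) (auto simp: Em_def)
    thus "(\<Sum>b\<le>n. X a b * Em a b i j) = (if a = i then X i j else 0)" using True by simp
  qed
  thus ?thesis using True by simp
next
  case False
  hence "X i j = 0" using assms by (auto simp: supported_def)
  moreover have "(\<Sum>a\<le>n. \<Sum>b\<le>n. X a b * Em a b i j) = 0"
    using False by (intro sum.neutral ballI) (auto simp: Em_def)
  ultimately show ?thesis by simp
qed

definition traceless_part :: "nat \<Rightarrow> cmat \<Rightarrow> cmat" where
  "traceless_part n M = mdiff M (msc (mtrace n M / of_nat (n + 1)) (Idm n))"

lemma slg_traceless_part: assumes "supported n M" shows "traceless_part n M \<in> slg n"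
proof -
  have "mtrace n (traceless_part n M) = mtrace n M - mtrace n M / of_nat (n + 1) * mtrace n (Idm n)"
    by (simp add: traceless_part_def mtrace_def sum_subtractf sum_distrib_left)
  also have "\<dots> = 0" unfolding mtrace_Idm by (simp del: of_nat_Suc)
  finally show ?thesis
    using assms by (auto simp: slg_iff supported_def traceless_part_def Idm_def)
qed

lemma expand_traceless_part: assumes X: "X \<in> slg n"
  shows "X i j = (\<Sum>a\<le>n. \<Sum>b\<le>n. X a b * traceless_part n (Em a b) i j)"
proof -
  have tr: "(\<Sum>a\<le>n. \<Sum>b\<le>n. X a b * mtrace n (Em a b)) = (\<Sum>a\<le>n. X a a)"
  proof (rule sum.cong[OF refl])
    fix a assume "a \<in> {..n}"
    hence "(\<Sum>b\<le>n. X a b * mtrace n (Em a b)) = (\<Sum>b\<le>n. if b = a then X a a else 0)"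
      by (intro sum.cong) (auto simp: mtrace_Em)
    thus "(\<Sum>b\<le>n. X a b * mtrace n (Em a b)) = X a a" using \<open>a \<in> {..n}\<close> by simp
  qed
  have "(\<Sum>a\<le>n. \<Sum>b\<le>n. X a b * traceless_part n (Em a b) i j)
      = (\<Sum>a\<le>n. \<Sum>b\<le>n. X a b * Em a b i j)
        - Idm n i j / of_nat (n+1) * (\<Sum>a\<le>n. \<Sum>b\<le>n. X a b * mtrace n (Em a b))"
    by (simp add: traceless_part_def sum_subtractf sum_distrib_left algebra_simps)
  also have "\<dots> = X i j"
    using X unfolding tr by (simp add: slg_def mtrace_def flip: expand_Em[OF slg_supported[OF X]])
  finally show ?thesis by simp
qed

lemma unitary_basis_exists: "\<exists>B. unitary_basis n B"
proof -
  have "finite ((\<lambda>(a,b). traceless_part n (Em a b)) ` ({..n} \<times> {..n}))" by simp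
  then obtain S where S: "set S = (\<lambda>(a,b). traceless_part n (Em a b)) ` ({..n} \<times> {..n})"
    using finite_list by blast
  have "set S \<subseteq> slg n" unfolding S by (auto intro!: slg_traceless_part supported_Em)
  then obtain B where B: "set B \<subseteq> slg n" "orthonormal n B" "\<forall>v\<in>set S. \<exists>c. v = lincomb c B"
    using gram_schmidt by blast
  have ex: "\<exists>c. traceless_part n (Em a b) = lincomb c B" if "a \<le> n" "b \<le> n" for a b
  proof -
    have "traceless_part n (Em a b) \<in> set S" unfolding S using that by force
    thus ?thesis using B(3) by blast
  qed
  define d where "d a b = (SOME c. traceless_part n (Em a b) = lincomb c B)" for a b
  have d: "traceless_part n (Em a b) = lincomb (d a b) B" if "a \<le> n" "b \<le> n" for a b
    unfolding d_def by (rule someI_ex[OF ex[OF that]])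
  have "\<exists>c. X = (\<lambda>a b. \<Sum>i<length B. c i * (B!i) a b)" if X: "X \<in> slg n" for X
  proof (intro exI ext)
    fix i j
    have "X i j = (\<Sum>a\<le>n. \<Sum>b\<le>n. \<Sum>k<length B. X a b * d a b k * (B!k) i j)"
      using expand_traceless_part[OF X, of i j] d by (simp add: lincomb_def sum_distrib_left mult.assoc)
    also have "\<dots> = (\<Sum>a\<le>n. \<Sum>k<length B. \<Sum>b\<le>n. X a b * d a b k * (B!k) i j)"
      by (rule sum.cong[OF refl]) (rule sum.swap)
    also have "\<dots> = (\<Sum>k<length B. \<Sum>a\<le>n. \<Sum>b\<le>n. X a b * d a b k * (B!k) i j)"
      by (rule sum.swap)
    also have "\<dots> = (\<Sum>k<length B. (\<Sum>a\<le>n. \<Sum>b\<le>n. X a b * d a b k) * (B!k) i j)"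
      by (simp add: sum_distrib_right)
    finally show "X i j = (\<Sum>k<length B. (\<Sum>a\<le>n. \<Sum>b\<le>n. X a b * d a b k) * (B!k) i j)" .
  qed
  thus ?thesis using B(1,2) by (intro exI[of _ B]) (auto simp: unitary_basis_def orthonormal_def)
qed

lemma parseval:
  assumes B: "unitary_basis n B" and F: "F \<in> slg n"
  shows "(\<Sum>i<length B. (cmod (minner n (B!i) F))\<^sup>2) = (\<Sum>a\<le>n. \<Sum>b\<le>n. (cmod (F a b))\<^sup>2)"
proof -
  obtain c where c: "F = lincomb c B" using B F by (auto simp: unitary_basis_def lincomb_def)
  have on: "orthonormal n B" using B by (simp add: unitary_basis_def orthonormal_def)
  have coeff: "minner n (B!i) F = cnj (c i)" if "i < length B" for i
    using minner_lincomb_orthonormal[OF on that, of c] cnj_minner[of n F "B!i"] c by simp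
  have "complex_of_real (\<Sum>a\<le>n. \<Sum>b\<le>n. (cmod (F a b))\<^sup>2) = minner n F F"
    by (simp add: minner_self)
  also have "\<dots> = (\<Sum>k<length B. c k * cnj (c k))"
    by (subst (1) c) (simp add: lincomb_def minner_sum_left coeff)
  also have "\<dots> = (\<Sum>k<length B. complex_of_real ((cmod (c k))\<^sup>2))"
    by (simp only: complex_norm_square)
  also have "\<dots> = complex_of_real (\<Sum>i<length B. (cmod (minner n (B!i) F))\<^sup>2)"
    unfolding of_real_sum by (intro sum.cong refl) (simp add: coeff)
  finally show ?thesis by (simp only: of_real_eq_iff)
qed


section \<open>The torsion-twisted Chern--Ricci operator\<close>

definition is_P_op :: "nat \<Rightarrow> (cmat \<Rightarrow> cmat \<Rightarrow> cmat) \<Rightarrow> cmat list \<Rightarrow> (cmat \<Rightarrow> cmat) \<Rightarrow> bool" where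
  "is_P_op n \<mu> B P \<longleftrightarrow> lin_endo n P
       \<and> (\<forall>X. X \<notin> slg n \<longrightarrow> P X = mzero)
       \<and> (\<forall>X\<in>slg n. \<forall>Y\<in>slg n. minner n (P X) Y = minner n X (P Y))
       \<and> (\<forall>X\<in>slg n. minner n (P X) X =
            complex_of_real (\<Sum>j<length B. \<Sum>i<j. (cmod (minner n (\<mu> (B!i) (B!j)) X))\<^sup>2))"

definition ubasis :: "nat \<Rightarrow> cmat list" where
  "ubasis n = (SOME B. unitary_basis n B)"

lemma unitary_basis_ubasis: "unitary_basis n (ubasis n)"
  unfolding ubasis_def using unitary_basis_exists by (rule someI_ex)

lemma slg_ubasis: "set (ubasis n) \<subseteq> slg n"
  using unitary_basis_ubasis by (simp add: unitary_basis_def)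

lemma P_op_eq_The: "P_op n \<mu> = (THE P. is_P_op n \<mu> (ubasis n) P)"
  by (simp add: P_op_def is_P_op_def ubasis_def Let_def)

lemma lin_endo_eq_zero_if_form_zero:
  assumes R: "lin_endo n R" and q: "\<And>X. X \<in> slg n \<Longrightarrow> minner n (R X) X = 0"
    and X: "X \<in> slg n"
  shows "R X = mzero"
proof -
  have add: "R (madd U V) = madd (R U) (R V)" if "U \<in> slg n" "V \<in> slg n" for U V
    using R that by (simp add: lin_endo_def)
  have scale: "R (msc c U) = msc c (R U)" if "U \<in> slg n" for U c
    using R that by (simp add: lin_endo_def)
  have RX: "R X \<in> slg n" using R X by (simp add: lin_endo_def)
  have "minner n (R X) Y = 0" if Y: "Y \<in> slg n" for Y
  proof -
    have iY: "msc \<i> Y \<in> slg n" by (rule slg_msc[OF Y])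
    have "minner n (R (madd X Y)) (madd X Y) = 0" using q slg_madd[OF X Y] by simp
    hence re: "minner n (R X) Y + minner n (R Y) X = 0"
      using q[OF X] q[OF Y] by (simp add: add[OF X Y] minner_madd_left minner_madd_right add.commute)
    have "minner n (R (madd X (msc \<i> Y))) (madd X (msc \<i> Y)) = 0" using q slg_madd[OF X iY] by simp
    hence "- \<i> * minner n (R X) Y + \<i> * minner n (R Y) X = 0"
      using q[OF X] q[OF Y]
      by (simp add: add[OF X iY] scale[OF Y] minner_linear algebra_simps)
    with re show ?thesis by (simp add: algebra_simps)
  qed
  thus ?thesis using minner_self_eq_zero[OF RX] RX by blast
qed

lemma is_P_op_form:
  "is_P_op n \<mu> B P \<Longrightarrow> X \<in> slg n \<Longrightarrow>
    minner n (P X) X = complex_of_real (\<Sum>j<length B. \<Sum>i<j. (cmod (minner n (\<mu> (B!i) (B!j)) X))\<^sup>2)"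
  unfolding is_P_op_def by blast

lemma is_P_op_unique: assumes "is_P_op n \<mu> B P" "is_P_op n \<mu> B P'" shows "P = P'"
proof
  fix X
  show "P X = P' X"
  proof (cases "X \<in> slg n")
    case False thus ?thesis using assms by (simp add: is_P_op_def)
  next
    case True
    define R where "R U = mdiff (P U) (P' U)" for U
    have "lin_endo n R" using assms unfolding is_P_op_def lin_endo_def R_def
      by (auto intro!: slg_mdiff simp: fun_eq_iff algebra_simps)
    moreover have "minner n (R U) U = 0" if "U \<in> slg n" for U
      using is_P_op_form[OF assms(1) that] is_P_op_form[OF assms(2) that]
      by (simp only: R_def minner_mdiff_left) simp
    ultimately have "R X = mzero" using True by (rule lin_endo_eq_zero_if_form_zero)
    thus ?thesis by (simp add: R_def fun_eq_iff)
  qed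
qed

lemma P_op_eqI: assumes "is_P_op n \<mu> (ubasis n) P" shows "P_op n \<mu> = P"
  unfolding P_op_eq_The
  by (rule the_equality[where P = "is_P_op n \<mu> (ubasis n)", OF assms]) (rule is_P_op_unique[OF _ assms])

text \<open>With $p = (j, i)$ running over the pairs $i < j$, this is
  $X \mapsto \sum_{i<j} \langle X, \mu(e_i,e_j)\rangle\, \mu(e_i,e_j)$.\<close>

definition P_sum :: "nat \<Rightarrow> (cmat \<Rightarrow> cmat \<Rightarrow> cmat) \<Rightarrow> cmat list \<Rightarrow> cmat \<Rightarrow> cmat" where
  "P_sum n \<mu> B X = (if X \<in> slg n then
     (\<lambda>a b. \<Sum>p\<in>Sigma {..<length B} lessThan.
        minner n X (\<mu> (B!snd p) (B!fst p)) * \<mu> (B!snd p) (B!fst p) a b)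
     else mzero)"

lemma sum_lower_triangle: "(\<Sum>j<(m::nat). \<Sum>i<j. f i j) = (\<Sum>p\<in>Sigma {..<m} lessThan. f (snd p) (fst p))"
  by (subst sum.Sigma) (auto simp: case_prod_beta)

lemma is_P_op_P_sum:
  assumes B: "set B \<subseteq> slg n" and closed: "\<And>U V. U \<in> slg n \<Longrightarrow> V \<in> slg n \<Longrightarrow> \<mu> U V \<in> slg n"
  shows "is_P_op n \<mu> B (P_sum n \<mu> B)"
proof -
  let ?K = "Sigma {..<length B} lessThan"
  let ?m = "\<lambda>p. \<mu> (B!snd p) (B!fst p)"
  have m: "?m p \<in> slg n" if "p \<in> ?K" for p
    using that B by (intro closed) (auto simp: subset_code(1))
  have P: "P_sum n \<mu> B X = (\<lambda>a b. \<Sum>p\<in>?K. minner n X (?m p) * ?m p a b)" if "X \<in> slg n" for X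
    using that by (simp add: P_sum_def)
  have "lin_endo n (P_sum n \<mu> B)"
    unfolding lin_endo_def
  proof (intro conjI ballI allI)
    fix X assume X: "X \<in> slg n"
    show "P_sum n \<mu> B X \<in> slg n" unfolding P[OF X] by (rule slg_sum) (use m in auto)
    fix c show "P_sum n \<mu> B (msc c X) = msc c (P_sum n \<mu> B X)"
      unfolding P[OF X] P[OF slg_msc[OF X]]
      by (intro ext) (simp add: minner_msc_left sum_distrib_left algebra_simps)
    fix Y assume Y: "Y \<in> slg n"
    show "P_sum n \<mu> B (madd X Y) = madd (P_sum n \<mu> B X) (P_sum n \<mu> B Y)"
      unfolding P[OF X] P[OF Y] P[OF slg_madd[OF X Y]]
      by (intro ext) (simp add: minner_madd_left sum.distrib[symmetric] algebra_simps)
  qed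
  moreover have "minner n (P_sum n \<mu> B X) Y = minner n X (P_sum n \<mu> B Y)"
    if X: "X \<in> slg n" and Y: "Y \<in> slg n" for X Y
    unfolding P[OF X] P[OF Y] minner_sum_left minner_sum_right
    by (intro sum.cong refl) (simp add: cnj_minner mult.commute)
  moreover have "minner n (P_sum n \<mu> B X) X =
      complex_of_real (\<Sum>j<length B. \<Sum>i<j. (cmod (minner n (\<mu> (B!i) (B!j)) X))\<^sup>2)"
    if X: "X \<in> slg n" for X
  proof -
    have "minner n (P_sum n \<mu> B X) X = (\<Sum>p\<in>?K. cnj (minner n (?m p) X) * minner n (?m p) X)"
      unfolding P[OF X] minner_sum_left by (simp add: cnj_minner)
    also have "\<dots> = (\<Sum>p\<in>?K. complex_of_real ((cmod (minner n (?m p) X))\<^sup>2))"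
      by (simp only: complex_norm_square mult.commute)
    finally show ?thesis unfolding sum_lower_triangle of_real_sum .
  qed
  ultimately show ?thesis unfolding is_P_op_def by (simp add: P_sum_def)
qed

lemma P_op_eq_P_sum:
  assumes "\<And>U V. U \<in> slg n \<Longrightarrow> V \<in> slg n \<Longrightarrow> \<mu> U V \<in> slg n"
  shows "P_op n \<mu> = P_sum n \<mu> (ubasis n)"
  by (rule P_op_eqI[OF is_P_op_P_sum[OF slg_ubasis assms]])

lemma P_sum_tendsto:
  assumes X: "X \<in> slg n" and B: "set B \<subseteq> slg n"
    and lim: "\<And>U V a b. U \<in> slg n \<Longrightarrow> V \<in> slg n \<Longrightarrow> ((\<lambda>t. \<mu> t U V a b) \<longlongrightarrow> \<nu> U V a b) F"
  shows "((\<lambda>t. P_sum n (\<mu> t) B X a b) \<longlongrightarrow> P_sum n \<nu> B X a b) F"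
proof -
  have "B ! i \<in> slg n" if "i < length B" for i using B that by (auto simp: subset_code(1))
  thus ?thesis
    unfolding P_sum_def minner_def using X by (auto intro!: tendsto_intros lim)
qed

lemma slg_mu_yz: "U \<in> slg n \<Longrightarrow> V \<in> slg n \<Longrightarrow> mu_yz n y z U V \<in> slg n"
  unfolding mu_yz_def hmap_def hinv_def
  by (intro slg_madd slg_msc slg_prSL slg_prCI slg_prS slg_comm slg_supported)

lemma slg_mu_inf: "U \<in> slg n \<Longrightarrow> V \<in> slg n \<Longrightarrow> mu_inf n U V \<in> slg n"
  unfolding mu_inf_def
  by (intro slg_madd slg_msc slg_prCI slg_comm slg_supported slg_prSL slg_prS)

lemma P_op_mu_yz_tendsto:
  assumes X: "X \<in> slg n"
    and lim: "\<And>U V a b. U \<in> slg n \<Longrightarrow> V \<in> slg n \<Longrightarrow>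
      ((\<lambda>t. mu_yz n (y t) (z t) U V a b) \<longlongrightarrow> mu_inf n U V a b) F"
  shows "((\<lambda>t. P_op n (mu_yz n (y t) (z t)) X a b) \<longlongrightarrow> P_op n (mu_inf n) X a b) F"
proof -
  have "P_op n (mu_yz n (y t) (z t)) = P_sum n (mu_yz n (y t) (z t)) (ubasis n)" for t
    by (rule P_op_eq_P_sum) (rule slg_mu_yz)
  moreover have "P_op n (mu_inf n) = P_sum n (mu_inf n) (ubasis n)"
    by (rule P_op_eq_P_sum) (rule slg_mu_inf)
  ultimately show ?thesis using P_sum_tendsto[OF X slg_ubasis lim] by simp
qed


section \<open>The quadratic form of $P_\infty$\<close>

lemma minner_Em: assumes "a \<le> n" "b \<le> n" shows "minner n (Em a b) Y = cnj (Y a b)"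
proof -
  have "minner n (Em a b) Y = (\<Sum>i\<le>n. if i = a then cnj (Y a b) else 0)"
    unfolding minner_def
  proof (intro sum.cong refl)
    fix i
    have "(\<Sum>j\<le>n. Em a b i j * cnj (Y i j)) = (\<Sum>j\<le>n. if j = b then (if i = a then cnj (Y a b) else 0) else 0)"
      by (intro sum.cong refl) (auto simp: Em_def)
    thus "(\<Sum>j\<le>n. Em a b i j * cnj (Y i j)) = (if i = a then cnj (Y a b) else 0)" using assms by simp
  qed
  thus ?thesis using assms by simp
qed

lemma prS_Em: "prS n (Em a b) = (if (a < n \<and> b = n) \<or> (a = n \<and> b < n) then Em a b else mzero)"
  by (intro ext) (auto simp: prS_def Em_def)

lemma prCI_Em: "a \<le> n \<Longrightarrow> b \<le> n \<Longrightarrow> prCI n (Em a b) = msc (if a = b then Iden n a a else 0) (Iden n)"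
  by (simp add: prCI_def minner_Em Iden_apply)

lemma prSL_Em_sl: "a < n \<Longrightarrow> b < n \<Longrightarrow>
    prSL n (Em a b) = mdiff (Em a b) (msc (if a = b then Iscale n else 0) (Iden n))"
  by (intro ext) (simp add: prSL_def prCI_Em prS_Em Iden_apply)

lemma prSL_Em_s: "(a < n \<and> b = n) \<or> (a = n \<and> b < n) \<Longrightarrow> prSL n (Em a b) = mzero"
  by (rule prSL_s_block) (auto simp: s_block_def Em_def)

lemma prSL_Em_corner: assumes n: "n \<ge> 1" shows "prSL n (Em n n) = msc (1 / of_nat (n+1)) (Idm n)"
proof (intro ext)
  fix i j
  have nz: "(of_nat n :: complex) \<noteq> 0" using n by simp
  have e1: "Iscale n * (Iscale n * of_nat n) = 1 / (of_nat n + 1)"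
    unfolding Iscale_sq_mult[OF n] using nz by simp
  have e2: "1 - Iscale n * (Iscale n * (of_nat n * of_nat n)) = 1 / (of_nat n + 1)"
    unfolding Iscale_sq_mult[OF n] using nz by (simp add: divide_simps)
  have e: "prSL n (Em n n) = mdiff (mdiff (Em n n) (msc (Iden n n n) (Iden n))) mzero"
    by (simp add: prSL_def prCI_Em prS_Em)
  consider "i = j \<and> i < n" | "i = j \<and> i = n" | "\<not> (i = j \<and> i \<le> n)" by linarith
  thus "prSL n (Em n n) i j = msc (1 / of_nat (n+1)) (Idm n) i j"
  proof cases
    case 1
    have "prSL n (Em n n) i j = Iscale n * (Iscale n * of_nat n)"
      unfolding e using 1 by (simp add: Iden_apply Em_def algebra_simps)
    thus ?thesis using 1 e1 by (simp add: Idm_def)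
  next
    case 2
    have "prSL n (Em n n) i j = 1 - Iscale n * (Iscale n * (of_nat n * of_nat n))"
      unfolding e using 2 by (simp add: Iden_apply Em_def algebra_simps)
    thus ?thesis using 2 e2 by (simp add: Idm_def)
  next
    case 3
    thus ?thesis unfolding e by (auto simp: Iden_apply Em_def Idm_def)
  qed
qed

lemma comm_Em_Em: assumes "b \<le> n" "d \<le> n"
  shows "comm n (Em a b) (Em c d) =
    mdiff (msc (if b = c then 1 else 0) (Em a d)) (msc (if d = a then 1 else 0) (Em c b))"
proof (intro ext)
  fix i j
  have "(\<Sum>e\<le>n. Em a b i e * Em c d e j) = (\<Sum>e\<le>n. if e = b then (if b = c then Em a d i j else 0) else 0)"
    by (intro sum.cong refl) (auto simp: Em_def)
  moreover have "(\<Sum>e\<le>n. Em c d i e * Em a b e j) = (\<Sum>e\<le>n. if e = d then (if d = a then Em c b i j else 0) else 0)"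
    by (intro sum.cong refl) (auto simp: Em_def)
  ultimately show "comm n (Em a b) (Em c d) i j =
      mdiff (msc (if b = c then 1 else 0) (Em a d)) (msc (if d = a then 1 else 0) (Em c b)) i j"
    unfolding comm_apply sum_subtractf using assms by simp
qed

lemma comm_Em_Iden: assumes "a \<le> n" "b \<le> n"
  shows "comm n (Em a b) (Iden n) = msc (Iden n b b - Iden n a a) (Em a b)"
proof (intro ext)
  fix i j
  have "(\<Sum>e\<le>n. Em a b i e * Iden n e j) = (\<Sum>e\<le>n. if e = b then (if i = a \<and> j = b then Iden n b b else 0) else 0)"
    by (intro sum.cong refl) (auto simp: Em_def Iden_apply)
  moreover have "(\<Sum>e\<le>n. Iden n i e * Em a b e j) = (\<Sum>e\<le>n. if e = a then (if i = a \<and> j = b then Iden n a a else 0) else 0)"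
    by (intro sum.cong refl) (auto simp: Em_def Iden_apply)
  ultimately show "comm n (Em a b) (Iden n) i j = msc (Iden n b b - Iden n a a) (Em a b) i j"
    unfolding comm_apply sum_subtractf using assms by (simp add: Em_def algebra_simps)
qed

lemma comm_Iden_Em: "a \<le> n \<Longrightarrow> b \<le> n \<Longrightarrow> comm n (Iden n) (Em a b) = msc (Iden n a a - Iden n b b) (Em a b)"
  by (subst comm_swap) (intro ext, simp add: comm_Em_Iden algebra_simps)

lemma comm_Idm: assumes M: "supported n M" shows "comm n (Idm n) M = mzero"
proof (intro ext)
  fix i j
  have "(\<Sum>e\<le>n. Idm n i e * M e j) = (\<Sum>e\<le>n. if e = i then M i j else 0)"
    by (intro sum.cong refl) (auto simp: Idm_def)
  moreover have "(\<Sum>e\<le>n. M i e * Idm n e j) = (\<Sum>e\<le>n. if e = j then M i j else 0)"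
    by (intro sum.cong refl) (auto simp: Idm_def)
  ultimately show "comm n (Idm n) M i j = mzero i j"
    unfolding comm_apply sum_subtractf using M by (auto simp: supported_def)
qed


lemma linear_functional_sum:
  assumes add: "\<And>A C. f (madd A C) = f A + f C" and hom: "\<And>c A. f (msc c A) = c * f A"
    and fin: "finite K"
  shows "f (\<lambda>i j. \<Sum>k\<in>K. c k * M k i j) = (\<Sum>k\<in>K. c k * f (M k))"
  using fin
proof (induction K rule: finite_induct)
  case empty
  have "f mzero = f (msc 0 mzero)" by simp
  thus ?case by (simp only: hom) (simp add: mzero_def)
next
  case (insert k K)
  have "(\<lambda>i j. \<Sum>k\<in>insert k K. c k * M k i j) = madd (msc (c k) (M k)) (\<lambda>i j. \<Sum>k\<in>K. c k * M k i j)"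
    using insert by (intro ext) simp
  thus ?case using insert by (simp add: add hom)
qed

lemma linear_functional_expand:
  assumes add: "\<And>A C. f (madd A C) = f A + f C" and hom: "\<And>c A. f (msc c A) = c * f A"
    and U: "supported n U"
  shows "f U = (\<Sum>a\<le>n. \<Sum>b\<le>n. U a b * f (Em a b))"
proof -
  have "U = (\<lambda>i j. \<Sum>p\<in>{..n} \<times> {..n}. U (fst p) (snd p) * Em (fst p) (snd p) i j)"
    by (intro ext, rule trans[OF expand_Em[OF U]]) (simp add: sum.cartesian_product case_prod_beta)
  hence "f U = f (\<lambda>i j. \<Sum>p\<in>{..n} \<times> {..n}. U (fst p) (snd p) * Em (fst p) (snd p) i j)"
    by (rule arg_cong)
  also have "\<dots> = (\<Sum>p\<in>{..n} \<times> {..n}. U (fst p) (snd p) * f (Em (fst p) (snd p)))"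
    by (rule linear_functional_sum[OF add hom]) simp
  finally show ?thesis by (simp add: sum.cartesian_product case_prod_beta)
qed

text \<open>A linear functional vanishing on the identity matrix is $\langle \cdot, F\rangle$ for a traceless $F$,
  so by Parseval both sides equal $\|F\|^2$.\<close>

lemma sum_sq_functional_ubasis:
  assumes B: "unitary_basis n B"
    and add: "\<And>A C. f (madd A C) = f A + f C" and hom: "\<And>c A. f (msc c A) = c * f A"
    and f_Idm: "f (Idm n) = 0"
  shows "(\<Sum>i<length B. (cmod (f (B!i)))\<^sup>2) = (\<Sum>a\<le>n. \<Sum>b\<le>n. (cmod (f (Em a b)))\<^sup>2)"
proof -
  define F where "F = (\<lambda>a b. if a \<le> n \<and> b \<le> n then cnj (f (Em a b)) else 0)"
  have fF: "f U = minner n U F" if "supported n U" for U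
    unfolding linear_functional_expand[OF add hom that] minner_def F_def by simp
  have "minner n (Idm n) F = (\<Sum>a\<le>n. cnj (F a a))"
    unfolding minner_def
  proof (intro sum.cong refl)
    fix a assume a: "a \<in> {..n}"
    have "(\<Sum>b\<le>n. Idm n a b * cnj (F a b)) = (\<Sum>b\<le>n. if b = a then cnj (F a a) else 0)"
      using a by (intro sum.cong refl) (auto simp: Idm_def)
    thus "(\<Sum>b\<le>n. Idm n a b * cnj (F a b)) = cnj (F a a)" using a by simp
  qed
  hence "cnj (mtrace n F) = 0" using fF[OF supported_Idm] f_Idm by (simp add: mtrace_def cnj_sum)
  hence "mtrace n F = 0" by simp
  hence F: "F \<in> slg n" by (simp add: slg_iff supported_def F_def)
  have "(\<Sum>i<length B. (cmod (f (B!i)))\<^sup>2) = (\<Sum>i<length B. (cmod (minner n (B!i) F))\<^sup>2)"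
  proof (intro sum.cong refl)
    fix i assume "i \<in> {..<length B}"
    hence "B!i \<in> slg n" using B by (auto simp: unitary_basis_def)
    thus "(cmod (f (B!i)))\<^sup>2 = (cmod (minner n (B!i) F))\<^sup>2" by (simp add: fF slg_supported)
  qed
  also have "\<dots> = (\<Sum>a\<le>n. \<Sum>b\<le>n. (cmod (F a b))\<^sup>2)" by (rule parseval[OF B F])
  finally show ?thesis by (simp add: F_def)
qed

lemma cmod_diff_sq: "(cmod (x - y))\<^sup>2 = (cmod x)\<^sup>2 + (cmod y)\<^sup>2 - 2 * Re (x * cnj y)"
  unfolding cmod_power2 by (simp add: power2_eq_square algebra_simps)

lemma if_zero_simps:
  "cmod (if P then x else 0) = (if P then cmod x else 0)"
  "(if P then (r::real) else 0)\<^sup>2 = (if P then r\<^sup>2 else 0)"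
  "(if P then x else 0) * cnj (if Q then y else 0) = (if P \<and> Q then x * cnj y else 0)"
  "Re (if P then x else 0) = (if P then Re x else 0)"
  "(if P then x else 0) / c = (if P then x / c else 0)"
  "(\<Sum>c\<in>A. if P then f c else 0) = (if P then sum f A else 0)"
  by auto

lemma sum_sq_delta_diff:
  fixes u :: "nat \<Rightarrow> complex" assumes n: "n \<ge> 1"
  shows "(\<Sum>a<n. \<Sum>b<n. \<Sum>c<n. (cmod ((if b = c then u a else 0) - (if a = b then u c / of_nat n else 0)))\<^sup>2)
     = (real n - 1 / real n) * (\<Sum>a<n. (cmod (u a))\<^sup>2)"
proof -
  have "(\<Sum>a<n. \<Sum>b<n. \<Sum>c<n. (cmod ((if b = c then u a else 0) - (if a = b then u c / of_nat n else 0)))\<^sup>2)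
    = (\<Sum>a<n. \<Sum>b<n. \<Sum>c<n. ((if b = c then (cmod (u a))\<^sup>2 else 0)
        + (if a = b then (cmod (u c))\<^sup>2 / (real n)^2 else 0)
        - (if b = c \<and> a = b then 2 * (cmod (u a))\<^sup>2 / real n else 0)))"
    by (intro sum.cong refl, simp only: cmod_diff_sq if_zero_simps)
       (auto simp: norm_divide power_divide complex_norm_square[symmetric])
  also have "\<dots> = (\<Sum>a<n. \<Sum>b<n. ((cmod (u a))\<^sup>2 + (if a = b then (\<Sum>c<n. (cmod (u c))\<^sup>2) / (real n)^2 else 0)
        - (if a = b then 2 * (cmod (u a))\<^sup>2 / real n else 0)))"
    by (intro sum.cong refl) (simp add: sum.distrib sum_subtractf if_zero_simps conj_commute sum_divide_distrib)
  also have "\<dots> = (real n - 1 / real n) * (\<Sum>a<n. (cmod (u a))\<^sup>2)"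
    using n by (simp add: sum.distrib sum_subtractf sum_distrib_left[symmetric]
        sum_divide_distrib[symmetric] field_simps power2_eq_square)
  finally show ?thesis .
qed

lemma sum_sq_delta_comm:
  fixes A :: "nat \<Rightarrow> nat \<Rightarrow> complex"
  shows "(\<Sum>a<n. \<Sum>b<n. \<Sum>c<n. \<Sum>d<n. (cmod ((if b = c then A a d else 0) - (if d = a then A c b else 0)))\<^sup>2)
     = 2 * real n * (\<Sum>a<n. \<Sum>d<n. (cmod (A a d))\<^sup>2) - 2 * (cmod (\<Sum>a<n. A a a))\<^sup>2"
proof -
  have "(\<Sum>a<n. \<Sum>b<n. \<Sum>c<n. \<Sum>d<n. (cmod ((if b = c then A a d else 0) - (if d = a then A c b else 0)))\<^sup>2)
    = (\<Sum>a<n. \<Sum>b<n. \<Sum>c<n. \<Sum>d<n. ((if b = c then (cmod (A a d))\<^sup>2 else 0)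
        + (if d = a then (cmod (A c b))\<^sup>2 else 0)
        - (if b = c then if d = a then 2 * Re (A a a * cnj (A b b)) else 0 else 0)))"
    by (intro sum.cong refl, simp only: cmod_diff_sq if_zero_simps) auto
  also have "\<dots> = (\<Sum>a<n. \<Sum>b<n. ((\<Sum>d<n. (cmod (A a d))\<^sup>2) + (\<Sum>c<n. (cmod (A c b))\<^sup>2)
        - 2 * Re (A a a * cnj (A b b))))"
    by (intro sum.cong refl, simp only: sum.distrib sum_subtractf if_zero_simps) simp
  also have "\<dots> = real n * (\<Sum>a<n. \<Sum>d<n. (cmod (A a d))\<^sup>2) + real n * (\<Sum>b<n. \<Sum>c<n. (cmod (A c b))\<^sup>2)
      - 2 * (\<Sum>a<n. \<Sum>b<n. Re (A a a * cnj (A b b)))"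
    by (simp add: sum.distrib sum_subtractf sum_distrib_left)
  also have "(\<Sum>b<n. \<Sum>c<n. (cmod (A c b))\<^sup>2) = (\<Sum>a<n. \<Sum>d<n. (cmod (A a d))\<^sup>2)"
    by (rule sum.swap)
  also have "(\<Sum>a<n. \<Sum>b<n. Re (A a a * cnj (A b b))) = Re (\<Sum>a<n. A a a * (\<Sum>b<n. cnj (A b b)))"
    by (simp only: Re_sum sum_distrib_left)
  also have "\<dots> = Re ((\<Sum>a<n. A a a) * cnj (\<Sum>b<n. A b b))"
    by (simp only: sum_distrib_right cnj_sum)
  also have "\<dots> = (cmod (\<Sum>a<n. A a a))\<^sup>2"
    by (simp only: complex_norm_square[symmetric] Re_complex_of_real)
  finally show ?thesis by simp
qed

lemma sum3_reverse: "(\<Sum>a\<in>A. \<Sum>b\<in>B. \<Sum>c\<in>C. f a b c) = (\<Sum>c\<in>C. \<Sum>b\<in>B. \<Sum>a\<in>A. f a b c)"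
proof -
  have "(\<Sum>a\<in>A. \<Sum>b\<in>B. \<Sum>c\<in>C. f a b c) = (\<Sum>a\<in>A. \<Sum>c\<in>C. \<Sum>b\<in>B. f a b c)"
    by (rule sum.cong[OF refl], rule sum.swap)
  also have "\<dots> = (\<Sum>c\<in>C. \<Sum>a\<in>A. \<Sum>b\<in>B. f a b c)" by (rule sum.swap)
  also have "\<dots> = (\<Sum>c\<in>C. \<Sum>b\<in>B. \<Sum>a\<in>A. f a b c)" by (rule sum.cong[OF refl], rule sum.swap)
  finally show ?thesis .
qed

lemma sum_pair_swaps:
  fixes h :: "nat \<Rightarrow> nat \<Rightarrow> nat \<Rightarrow> nat \<Rightarrow> real"
  assumes h_swap: "\<And>a b c d. h a b c d = h c d a b"
  shows "(\<Sum>a<n. \<Sum>b<n. \<Sum>d<n. h a b n d) = (\<Sum>b<n. \<Sum>c<n. \<Sum>d<n. h n b c d)"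
    and "(\<Sum>a<n. \<Sum>c<n. \<Sum>d<n. h a n c d) = (\<Sum>a<n. \<Sum>b<n. \<Sum>c<n. h a b c n)"
    and "(\<Sum>b<n. \<Sum>c<n. h n b c n) = (\<Sum>a<n. \<Sum>d<n. h a n n d)"
proof -
  have "(\<Sum>a<n. \<Sum>b<n. \<Sum>d<n. h a b n d) = (\<Sum>a<n. \<Sum>b<n. \<Sum>d<n. h n d a b)"
    by (intro sum.cong refl) (rule h_swap)
  also have "\<dots> = (\<Sum>d<n. \<Sum>a<n. \<Sum>b<n. h n d a b)"
    by (subst sum.swap) (rule sum.cong[OF refl], rule sum.swap)
  finally show "(\<Sum>a<n. \<Sum>b<n. \<Sum>d<n. h a b n d) = (\<Sum>b<n. \<Sum>c<n. \<Sum>d<n. h n b c d)" .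
  have "(\<Sum>a<n. \<Sum>c<n. \<Sum>d<n. h a n c d) = (\<Sum>a<n. \<Sum>c<n. \<Sum>d<n. h c d a n)"
    by (intro sum.cong refl) (rule h_swap)
  also have "\<dots> = (\<Sum>c<n. \<Sum>d<n. \<Sum>a<n. h c d a n)"
    by (subst sum.swap) (rule sum.cong[OF refl], rule sum.swap)
  finally show "(\<Sum>a<n. \<Sum>c<n. \<Sum>d<n. h a n c d) = (\<Sum>a<n. \<Sum>b<n. \<Sum>c<n. h a b c n)" .
  have "(\<Sum>b<n. \<Sum>c<n. h n b c n) = (\<Sum>b<n. \<Sum>c<n. h c n n b)"
    by (intro sum.cong refl) (rule h_swap)
  also have "\<dots> = (\<Sum>c<n. \<Sum>b<n. h c n n b)" by (rule sum.swap)
  finally show "(\<Sum>b<n. \<Sum>c<n. h n b c n) = (\<Sum>a<n. \<Sum>d<n. h a n n d)" .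
qed

lemma sum_lower_triangle_half:
  fixes h :: "nat \<Rightarrow> nat \<Rightarrow> real"
  assumes sym: "\<And>i j. h i j = h j i" and diag: "\<And>i. h i i = 0"
  shows "(\<Sum>j<m. \<Sum>i<j. h i j) = (\<Sum>i<m. \<Sum>j<m. h i j) / 2"
proof (induction m)
  case (Suc m)
  have "(\<Sum>i<Suc m. \<Sum>j<Suc m. h i j) = (\<Sum>i<m. \<Sum>j<m. h i j) + (\<Sum>i<m. h i m) + (\<Sum>j<m. h m j) + h m m"
    by (simp add: sum.distrib)
  also have "(\<Sum>j<m. h m j) = (\<Sum>i<m. h i m)" using sym by simp
  finally show ?case using Suc diag by simp
qed simp

lemma sum_atMost2_split:
  "(\<Sum>a\<le>(n::nat). \<Sum>b\<le>n. h a b) = (\<Sum>a<n. \<Sum>b<n. h a b) + (\<Sum>a<n. h a n) + (\<Sum>b<n. h n b) + (h n n :: real)"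
  by (simp add: sum_atMost_last sum.distrib algebra_simps)

lemma sum_atMost4_split: "(\<Sum>a\<le>(n::nat). \<Sum>b\<le>n. \<Sum>c\<le>n. \<Sum>d\<le>n. h a b c d) =
  (\<Sum>a<n. \<Sum>b<n. \<Sum>c<n. \<Sum>d<n. h a b c d) + (\<Sum>a<n. \<Sum>b<n. \<Sum>c<n. h a b c n)
  + (\<Sum>a<n. \<Sum>b<n. \<Sum>d<n. h a b n d) + (\<Sum>a<n. \<Sum>b<n. h a b n n)
  + (\<Sum>a<n. \<Sum>c<n. \<Sum>d<n. h a n c d) + (\<Sum>a<n. \<Sum>c<n. h a n c n) + (\<Sum>a<n. \<Sum>d<n. h a n n d)
  + (\<Sum>a<n. h a n n n) + (\<Sum>b<n. \<Sum>c<n. \<Sum>d<n. h n b c d) + (\<Sum>b<n. \<Sum>c<n. h n b c n)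
  + (\<Sum>b<n. \<Sum>d<n. h n b n d) + (\<Sum>b<n. h n b n n) + (\<Sum>c<n. \<Sum>d<n. h n n c d)
  + (\<Sum>c<n. h n n c n) + (\<Sum>d<n. h n n n d) + (h n n n n :: real)"
  by (simp add: sum_atMost_last sum.distrib algebra_simps)


lemma mu_inf_madd_left: "mu_inf n (madd U U') V = madd (mu_inf n U V) (mu_inf n U' V)"
  by (intro ext) (simp add: mu_inf_def bracket_linear algebra_simps)
lemma mu_inf_madd_right: "mu_inf n V (madd U U') = madd (mu_inf n V U) (mu_inf n V U')"
  by (intro ext) (simp add: mu_inf_def bracket_linear algebra_simps)
lemma mu_inf_msc_left: "mu_inf n (msc c U) V = msc c (mu_inf n U V)"
  by (intro ext) (simp add: mu_inf_def bracket_linear algebra_simps)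
lemma mu_inf_msc_right: "mu_inf n V (msc c U) = msc c (mu_inf n V U)"
  by (intro ext) (simp add: mu_inf_def bracket_linear algebra_simps)

lemma mu_inf_swap: "mu_inf n V U = msc (-1) (mu_inf n U V)"
proof -
  have swap: "\<And>A B. comm n A B = msc (-1) (comm n B A)" by (rule comm_swap)
  show ?thesis
    by (intro ext) (simp add: mu_inf_def swap[of "prSL n V"] swap[of "prS n V"] prCI_msc algebra_simps)
qed

lemma mu_inf_Idm_left: assumes "supported n V" shows "mu_inf n (Idm n) V = mzero"
proof -
  have "prCI n (Idm n) = mzero" by (intro ext) (simp add: prCI_def minner_Iden Idm_def)
  moreover have prS: "prS n (Idm n) = mzero" by (intro ext) (simp add: prS_def Idm_def)
  ultimately have "prSL n (Idm n) = Idm n" by (rule prSL_eq_self)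
  thus ?thesis using assms by (simp add: mu_inf_def prS comm_Idm supported_prSL supported_prS)
qed

lemma mu_inf_Idm_right: "supported n U \<Longrightarrow> mu_inf n U (Idm n) = mzero"
  by (subst mu_inf_swap) (simp add: mu_inf_Idm_left)

definition s_s_coeff :: "nat \<Rightarrow> cmat \<Rightarrow> complex" where
  "s_s_coeff n X = complex_of_real (sqrt ((real n ^ 2 - 2) / (real n * (real n + 1))))
      * (Iscale n * (1 + of_nat n)) * minner n (Iden n) X"

lemma Iscale_coeffs: assumes "n \<ge> 1"
  shows "Iscale n * ((Iscale n + Iscale n * of_nat n) * x) = x / of_nat n"
    and "- (Iscale n * ((- (Iscale n * of_nat n) - Iscale n) * x)) = x / of_nat n"
proof -
  have "(of_nat n :: complex) \<noteq> 0" using assms by simp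
  hence c: "Iscale n * (Iscale n * (1 + of_nat n)) = 1 / of_nat n"
    unfolding Iscale_sq_mult[OF assms] by (simp add: add.commute)
  have "Iscale n * ((Iscale n + Iscale n * of_nat n) * x) = Iscale n * (Iscale n * (1 + of_nat n)) * x"
    by (simp add: algebra_simps)
  thus "Iscale n * ((Iscale n + Iscale n * of_nat n) * x) = x / of_nat n" unfolding c by simp
  have "- (Iscale n * ((- (Iscale n * of_nat n) - Iscale n) * x)) = Iscale n * (Iscale n * (1 + of_nat n)) * x"
    by (simp add: algebra_simps)
  thus "- (Iscale n * ((- (Iscale n * of_nat n) - Iscale n) * x)) = x / of_nat n" unfolding c by simp
qed

text \<open>$G(a,b,c,d) = \langle \mu_\infty(E_{ab}, E_{cd}), X\rangle$.  Index $n$ is the last one, so the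
  ``column'' units $E_{an}$ and the ``row'' units $E_{nb}$ ($a, b < n$) span $\mathfrak{s}$.\<close>

context
  fixes n :: nat and X :: cmat
  assumes n: "n \<ge> 1" and X: "X \<in> slg n"
begin

abbreviation G :: "nat \<Rightarrow> nat \<Rightarrow> nat \<Rightarrow> nat \<Rightarrow> complex" where
  "G a b c d \<equiv> minner n (mu_inf n (Em a b) (Em c d)) X"

lemmas G_simps = mu_inf_def prSL_Em_sl prSL_Em_s prS_Em
  comm_mdiff_left comm_mdiff_right comm_msc_left comm_msc_right comm_Em_Em comm_Em_Iden comm_Iden_Em
  minner_linear minner_Em minner_prCI Iden_apply Iscale_coeffs[OF n]

lemma G_swap: "G c d a b = - G a b c d"
  by (subst mu_inf_swap) (simp add: minner_msc_left)

lemma G_sl_sl: "a < n \<Longrightarrow> b < n \<Longrightarrow> c < n \<Longrightarrow> d < n \<Longrightarrow>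
    G a b c d = (if b = c then cnj (X a d) else 0) - (if d = a then cnj (X c b) else 0)"
  by (simp add: G_simps)

lemma G_sl_col: "a < n \<Longrightarrow> b < n \<Longrightarrow> c < n \<Longrightarrow>
    G a b c n = (if b = c then cnj (X a n) else 0) - (if a = b then cnj (X c n) / of_nat n else 0)"
  by (simp add: G_simps)

lemma G_row_sl: "b < n \<Longrightarrow> c < n \<Longrightarrow> d < n \<Longrightarrow>
    G n b c d = (if b = c then cnj (X n d) else 0) - (if c = d then cnj (X n b) / of_nat n else 0)"
  by (simp add: G_simps)

lemma G_col_row: "a < n \<Longrightarrow> d < n \<Longrightarrow> G a n n d = (if a = d then s_s_coeff n X else 0)"
  by (simp add: G_simps s_s_coeff_def algebra_simps)

lemma G_col_col: "a < n \<Longrightarrow> c < n \<Longrightarrow> G a n c n = 0"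
  by (simp add: G_simps)

lemma G_row_row: "b < n \<Longrightarrow> d < n \<Longrightarrow> G n b n d = 0"
  by (simp add: G_simps)

lemma G_corner: assumes "c \<le> n" "d \<le> n" shows "G n n c d = 0"
proof -
  have "supported n (prSL n (Em c d))" by (intro supported_prSL supported_Em assms)
  moreover have "prS n (Em n n) = mzero" by (simp add: prS_Em)
  ultimately show ?thesis
    by (simp add: mu_inf_def prSL_Em_corner[OF n] comm_msc_left comm_Idm supported_prS)
qed


lemma sum_sq_G_sl: "(\<Sum>a<n. \<Sum>b<n. \<Sum>c<n. \<Sum>d<n. (cmod (G a b c d))\<^sup>2)
    = 2 * real n * (\<Sum>a<n. \<Sum>d<n. (cmod (X a d))\<^sup>2) - 2 * (cmod (X n n))\<^sup>2"
proof -
  have "(\<Sum>a<n. X a a) = - X n n"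
    using X mtrace_split[of n X] by (simp add: slg_def eq_neg_iff_add_eq_0)
  hence tr: "(\<Sum>a<n. cnj (X a a)) = cnj (- X n n)" by (simp flip: cnj_sum)
  have "(\<Sum>a<n. \<Sum>b<n. \<Sum>c<n. \<Sum>d<n. (cmod (G a b c d))\<^sup>2) = (\<Sum>a<n. \<Sum>b<n. \<Sum>c<n. \<Sum>d<n.
      (cmod ((if b = c then cnj (X a d) else 0) - (if d = a then cnj (X c b) else 0)))\<^sup>2)"
    by (intro sum.cong refl) (simp add: G_sl_sl)
  thus ?thesis unfolding sum_sq_delta_comm tr by simp
qed

lemma sum_sq_G_col: "(\<Sum>a<n. \<Sum>b<n. \<Sum>c<n. (cmod (G a b c n))\<^sup>2)
    = (real n - 1 / real n) * (\<Sum>a<n. (cmod (X a n))\<^sup>2)"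
proof -
  have "(\<Sum>a<n. \<Sum>b<n. \<Sum>c<n. (cmod (G a b c n))\<^sup>2) = (\<Sum>a<n. \<Sum>b<n. \<Sum>c<n.
      (cmod ((if b = c then cnj (X a n) else 0) - (if a = b then cnj (X c n) / of_nat n else 0)))\<^sup>2)"
    by (intro sum.cong refl) (simp add: G_sl_col)
  thus ?thesis unfolding sum_sq_delta_diff[OF n] by simp
qed

lemma sum_sq_G_row: "(\<Sum>b<n. \<Sum>c<n. \<Sum>d<n. (cmod (G n b c d))\<^sup>2)
    = (real n - 1 / real n) * (\<Sum>a<n. (cmod (X n a))\<^sup>2)"
proof -
  have "(\<Sum>b<n. \<Sum>c<n. \<Sum>d<n. (cmod (G n b c d))\<^sup>2) = (\<Sum>d<n. \<Sum>c<n. \<Sum>b<n. (cmod (G n b c d))\<^sup>2)"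
    by (rule sum3_reverse)
  also have "\<dots> = (\<Sum>d<n. \<Sum>c<n. \<Sum>b<n.
      (cmod ((if c = b then cnj (X n d) else 0) - (if d = c then cnj (X n b) / of_nat n else 0)))\<^sup>2)"
    by (intro sum.cong refl) (auto simp: G_row_sl)
  finally show ?thesis unfolding sum_sq_delta_diff[OF n] by simp
qed

text \<open>The remaining blocks of the sum either vanish or, by $G(a,b,c,d) = -G(c,d,a,b)$,
  repeat the ones computed above.\<close>

lemma sum_sq_G:
  "(\<Sum>a\<le>n. \<Sum>b\<le>n. \<Sum>c\<le>n. \<Sum>d\<le>n. (cmod (G a b c d))\<^sup>2)
   = 2 * real n * (\<Sum>a<n. \<Sum>d<n. (cmod (X a d))\<^sup>2) - 2 * (cmod (X n n))\<^sup>2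
     + 2 * (real n - 1 / real n) * ((\<Sum>a<n. (cmod (X a n))\<^sup>2) + (\<Sum>b<n. (cmod (X n b))\<^sup>2))
     + 2 * real n * (cmod (s_s_coeff n X))\<^sup>2"
proof -
  define h where "h a b c d = (cmod (G a b c d))\<^sup>2" for a b c d
  have h_swap: "h a b c d = h c d a b" for a b c d
    unfolding h_def G_swap[where a = a and b = b and c = c and d = d] by simp
  note swap = sum_pair_swaps[of h, OF h_swap]
  have corner: "h n n c d = 0" "h c d n n = 0" if "c \<le> n" "d \<le> n" for c d
    using that h_swap[of c d n n] by (simp_all add: h_def G_corner)
  have "h a n c n = 0" "h n b n d = 0" if "a < n" "b < n" "c < n" "d < n" for a b c d
    using that by (simp_all add: h_def G_col_col G_row_row)
  hence zero: "(\<Sum>a<n. \<Sum>b<n. h a b n n) = 0" "(\<Sum>a<n. \<Sum>c<n. h a n c n) = 0" "(\<Sum>a<n. h a n n n) = 0"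
    "(\<Sum>b<n. \<Sum>d<n. h n b n d) = 0" "(\<Sum>b<n. h n b n n) = 0" "(\<Sum>c<n. \<Sum>d<n. h n n c d) = 0"
    "(\<Sum>c<n. h n n c n) = 0" "(\<Sum>d<n. h n n n d) = 0" "h n n n n = 0"
    by (simp_all add: corner)
  have s: "(\<Sum>a<n. \<Sum>d<n. h a n n d) = real n * (cmod (s_s_coeff n X))\<^sup>2"
    by (simp add: h_def G_col_row if_zero_simps)
  have sl: "(\<Sum>a<n. \<Sum>b<n. \<Sum>c<n. \<Sum>d<n. h a b c d)
      = 2 * real n * (\<Sum>a<n. \<Sum>d<n. (cmod (X a d))\<^sup>2) - 2 * (cmod (X n n))\<^sup>2"
    unfolding h_def by (rule sum_sq_G_sl)
  have col: "(\<Sum>a<n. \<Sum>b<n. \<Sum>c<n. h a b c n) = (real n - 1 / real n) * (\<Sum>a<n. (cmod (X a n))\<^sup>2)"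
    unfolding h_def by (rule sum_sq_G_col)
  have row: "(\<Sum>b<n. \<Sum>c<n. \<Sum>d<n. h n b c d) = (real n - 1 / real n) * (\<Sum>a<n. (cmod (X n a))\<^sup>2)"
    unfolding h_def by (rule sum_sq_G_row)
  show ?thesis
    unfolding h_def[symmetric] sum_atMost4_split[of h n] swap sl col row s zero
    by (simp add: algebra_simps)
qed

end

lemma sum_sq_mu_inf_ubasis:
  assumes B: "unitary_basis n B" and X: "X \<in> slg n"
  shows "(\<Sum>j<length B. \<Sum>i<j. (cmod (minner n (mu_inf n (B!i) (B!j)) X))\<^sup>2)
   = (\<Sum>a\<le>n. \<Sum>b\<le>n. \<Sum>c\<le>n. \<Sum>d\<le>n. (cmod (minner n (mu_inf n (Em a b) (Em c d)) X))\<^sup>2) / 2"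
proof -
  define g where "g U V = minner n (mu_inf n U V) X" for U V
  define m where "m = length B"
  have B_supp: "supported n (B!i)" if "i < m" for i
    using B that by (intro slg_supported) (auto simp: unitary_basis_def m_def)
  have g_swap: "cmod (g V U) = cmod (g U V)" for U V
    unfolding g_def by (subst mu_inf_swap) (simp add: minner_msc_left)
  have g_diag: "g U U = 0" for U
  proof -
    have "g U U = - g U U" by (subst (2) g_def, subst mu_inf_swap) (simp add: g_def minner_msc_left)
    thus ?thesis by simp
  qed
  have right: "(\<Sum>j<m. (cmod (g U (B!j)))\<^sup>2) = (\<Sum>c\<le>n. \<Sum>d\<le>n. (cmod (g U (Em c d)))\<^sup>2)"
    if "supported n U" for U
    unfolding m_def
    by (rule sum_sq_functional_ubasis[OF B, of "\<lambda>V. g U V"])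
       (simp_all add: g_def mu_inf_madd_right mu_inf_msc_right minner_madd_left minner_msc_left
         mu_inf_Idm_right[OF that])
  have left: "(\<Sum>i<m. (cmod (g (B!i) V))\<^sup>2) = (\<Sum>a\<le>n. \<Sum>b\<le>n. (cmod (g (Em a b) V))\<^sup>2)"
    if "supported n V" for V
    unfolding m_def
    by (rule sum_sq_functional_ubasis[OF B, of "\<lambda>U. g U V"])
       (simp_all add: g_def mu_inf_madd_left mu_inf_msc_left minner_madd_left minner_msc_left
         mu_inf_Idm_left[OF that])
  have "(\<Sum>j<m. \<Sum>i<j. (cmod (g (B!i) (B!j)))\<^sup>2) = (\<Sum>i<m. \<Sum>j<m. (cmod (g (B!i) (B!j)))\<^sup>2) / 2"
    by (rule sum_lower_triangle_half) (simp_all add: g_swap g_diag)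
  also have "(\<Sum>i<m. \<Sum>j<m. (cmod (g (B!i) (B!j)))\<^sup>2) = (\<Sum>i<m. \<Sum>c\<le>n. \<Sum>d\<le>n. (cmod (g (B!i) (Em c d)))\<^sup>2)"
    by (intro sum.cong refl right B_supp) simp
  also have "\<dots> = (\<Sum>c\<le>n. \<Sum>d\<le>n. \<Sum>i<m. (cmod (g (B!i) (Em c d)))\<^sup>2)"
    by (subst sum.swap) (rule sum.cong[OF refl], rule sum.swap)
  also have "\<dots> = (\<Sum>c\<le>n. \<Sum>d\<le>n. \<Sum>a\<le>n. \<Sum>b\<le>n. (cmod (g (Em a b) (Em c d)))\<^sup>2)"
    by (intro sum.cong refl left supported_Em) auto
  also have "\<dots> = (\<Sum>c\<le>n. \<Sum>a\<le>n. \<Sum>d\<le>n. \<Sum>b\<le>n. (cmod (g (Em a b) (Em c d)))\<^sup>2)"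
    by (rule sum.cong[OF refl], rule sum.swap)
  also have "\<dots> = (\<Sum>c\<le>n. \<Sum>a\<le>n. \<Sum>b\<le>n. \<Sum>d\<le>n. (cmod (g (Em a b) (Em c d)))\<^sup>2)"
    by (rule sum.cong[OF refl], rule sum.cong[OF refl], rule sum.swap)
  also have "\<dots> = (\<Sum>a\<le>n. \<Sum>b\<le>n. \<Sum>c\<le>n. \<Sum>d\<le>n. (cmod (g (Em a b) (Em c d)))\<^sup>2)"
    by (subst sum.swap) (rule sum.cong[OF refl], rule sum.swap)
  finally show ?thesis by (simp add: g_def m_def)
qed


section \<open>The soliton\<close>

lemma slg_Dder: "Dder n X \<in> slg n"
  by (simp add: Dder_def slg_madd slg_msc slg_prCI slg_prS)
lemma Dder_madd: "Dder n (madd X Y) = madd (Dder n X) (Dder n Y)"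
  by (intro ext) (simp add: Dder_def prCI_madd prS_madd algebra_simps)
lemma Dder_msc: "Dder n (msc c X) = msc c (Dder n X)"
  by (intro ext) (simp add: Dder_def prCI_msc prS_msc algebra_simps)
lemma lin_endo_Dder: "lin_endo n (Dder n)"
  by (simp add: lin_endo_def slg_Dder Dder_madd Dder_msc)

lemma Dder_adjoint: "minner n (Dder n X) Y = minner n X (Dder n Y)"
  by (simp add: Dder_def minner_linear prCI_adjoint prS_adjoint)

lemma is_derivation_Dder: assumes n: "n \<ge> 1" shows "is_derivation n (mu_inf n) (Dder n)"
  unfolding is_derivation_def
proof (intro ballI)
  fix X Y assume X: "X \<in> slg n" and Y: "Y \<in> slg n"
  have D: "prSL n (Dder n X) = mzero" "prS n (Dder n X) = prS n X"
      "prSL n (Dder n Y) = mzero" "prS n (Dder n Y) = prS n Y"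
    by (simp_all add: Dder_def prSL_madd prSL_msc prS_madd prS_msc prSL_prCI[OF n] prSL_prS prS_prCI prS_prS)
  show "Dder n (mu_inf n X Y) = madd (mu_inf n (Dder n X) Y) (mu_inf n X (Dder n Y))"
    unfolding mu_inf_def D
    by (intro ext) (simp add: Dder_def bracket_linear block_brackets[OF n X Y] prCI_s_block prSL_s_block
        prS_s_block prCI_prCI[OF n] prS_prCI algebra_simps)
qed

definition P_inf :: "nat \<Rightarrow> cmat \<Rightarrow> cmat" where
  "P_inf n X = (if X \<in> slg n then mdiff (msc (of_nat n) X) (msc (1 / of_nat n) (Dder n X)) else mzero)"

lemma lin_endo_P_inf: "lin_endo n (P_inf n)"
  unfolding lin_endo_def
proof (intro conjI ballI allI)
  fix X assume X: "X \<in> slg n"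
  show "P_inf n X \<in> slg n" using X by (simp add: P_inf_def slg_mdiff slg_msc slg_Dder)
  fix c show "P_inf n (msc c X) = msc c (P_inf n X)"
    using X slg_msc[OF X] by (intro ext) (simp add: P_inf_def Dder_msc algebra_simps)
  fix Y assume Y: "Y \<in> slg n"
  show "P_inf n (madd X Y) = madd (P_inf n X) (P_inf n Y)"
    using X Y slg_madd[OF X Y] by (intro ext) (simp add: P_inf_def Dder_madd algebra_simps)
qed

lemma P_inf_adjoint: "X \<in> slg n \<Longrightarrow> Y \<in> slg n \<Longrightarrow> minner n (P_inf n X) Y = minner n X (P_inf n Y)"
  by (simp add: P_inf_def minner_linear Dder_adjoint)

lemma norm_of_nat_plus_one: "cmod (of_nat n + 1) = real n + 1" "cmod (1 + of_nat n) = 1 + real n"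
  using norm_of_nat[of "Suc n", where 'a = complex] by (simp_all add: add.commute)

context
  fixes n :: nat and X :: cmat
  assumes n2: "n \<ge> 2" and X: "X \<in> slg n"
begin

lemma cmod_minner_Iden_sq: "(cmod (minner n X (Iden n)))\<^sup>2 = (real n + 1) / real n * (cmod (X n n))\<^sup>2"
proof -
  have "(cmod (minner n X (Iden n)))\<^sup>2 = 1 / (real n * (real n + 1)) * (real n + 1)\<^sup>2 * (cmod (X n n))\<^sup>2"
    by (simp add: minner_Iden_slg[OF X] norm_mult Iscale_def norm_of_nat_plus_one power_mult_distrib)
  also have "\<dots> = (real n + 1) / real n * (cmod (X n n))\<^sup>2"
  proof -
    have "real n * (real n + 1) \<noteq> 0" using n2 by simp
    thus ?thesis using n2 by (simp add: field_simps power2_eq_square)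
  qed
  finally show ?thesis .
qed

lemma cmod_s_s_coeff_sq:
  "(cmod (s_s_coeff n X))\<^sup>2 = (real n ^ 2 - 2) * (real n + 1) / real n ^ 3 * (cmod (X n n))\<^sup>2"
proof -
  have "real n ^ 2 \<ge> 2 ^ 2" using n2 by (intro power_mono) auto
  hence k: "(real n ^ 2 - 2) / (real n * (real n + 1)) \<ge> 0" by simp
  have "(cmod (s_s_coeff n X))\<^sup>2 = (real n ^ 2 - 2) / (real n * (real n + 1))
      * (1 / (real n * (real n + 1)) * (1 + real n)\<^sup>2) * (cmod (minner n X (Iden n)))\<^sup>2"
    using k by (simp add: s_s_coeff_def norm_mult Iscale_def norm_of_nat_plus_one power_mult_distrib
        cnj_minner[of n X "Iden n", symmetric])
  also have "\<dots> = (real n ^ 2 - 2) * (real n + 1) / real n ^ 3 * (cmod (X n n))\<^sup>2"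
  proof -
    have "real n \<noteq> 0" "real n * (real n + 1) \<noteq> 0" "real n * (real n + 1) * (real n * (real n + 1)) \<noteq> 0"
      "real n * (real n + 1) * (real n * (real n + 1)) * real n \<noteq> 0"
      using n2 by auto
    thus ?thesis unfolding cmod_minner_Iden_sq by (simp add: field_simps power2_eq_square power3_eq_cube)
  qed
  finally show ?thesis .
qed

lemma P_inf_form:
  assumes B: "unitary_basis n B"
  shows "minner n (P_inf n X) X =
    complex_of_real (\<Sum>j<length B. \<Sum>i<j. (cmod (minner n (mu_inf n (B!i) (B!j)) X))\<^sup>2)"
proof -
  define sl where "sl = (\<Sum>a<n. \<Sum>d<n. (cmod (X a d))\<^sup>2)"
  define s where "s = (\<Sum>a<n. (cmod (X a n))\<^sup>2) + (\<Sum>b<n. (cmod (X n b))\<^sup>2)"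
  define c where "c = (cmod (X n n))\<^sup>2"
  have n: "n \<ge> 1" and nr: "real n > 0" using n2 by auto
  have X_X: "minner n X X = complex_of_real (sl + s + c)"
    unfolding minner_self sum_atMost2_split sl_def s_def c_def by (simp add: algebra_simps)
  have CI_X: "minner n (prCI n X) X = complex_of_real ((real n + 1) / real n * c)"
    unfolding c_def cmod_minner_Iden_sq[symmetric] complex_norm_square
    by (simp add: prCI_def minner_msc_left cnj_minner)
  have s_X: "minner n (prS n X) X = complex_of_real s"
    unfolding minner_prS_prS minner_self sum_atMost2_split s_def by (simp add: prS_def)
  have "minner n (P_inf n X) X
      = complex_of_real (real n * (sl + s + c) - 1 / real n * (2 * ((real n + 1) / real n * c) + s))"
    using X by (simp add: P_inf_def Dder_def minner_linear X_X CI_X s_X)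
  also have "real n * (sl + s + c) - 1 / real n * (2 * ((real n + 1) / real n * c) + s)
    = (2 * real n * sl - 2 * c + 2 * (real n - 1 / real n) * s
       + 2 * real n * ((real n ^ 2 - 2) * (real n + 1) / real n ^ 3 * c)) / 2"
    using nr by (simp add: field_simps power2_eq_square power3_eq_cube)
  finally show ?thesis
    unfolding sum_sq_mu_inf_ubasis[OF B X] sum_sq_G[OF n X] cmod_s_s_coeff_sq sl_def s_def c_def .
qed

end

lemma P_op_mu_inf: assumes "n \<ge> 2" shows "P_op n (mu_inf n) = P_inf n"
proof (rule P_op_eqI)
  have "X \<notin> slg n \<Longrightarrow> P_inf n X = mzero" for X by (simp add: P_inf_def)
  thus "is_P_op n (mu_inf n) (ubasis n) (P_inf n)"
    unfolding is_P_op_def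
    using lin_endo_P_inf P_inf_adjoint P_inf_form[OF assms _ unitary_basis_ubasis] by blast
qed

lemma shrinking_algebraic_soliton_mu_inf:
  assumes n2: "n \<ge> 2" shows "shrinking_algebraic_soliton n (mu_inf n)"
proof -
  have n: "n \<ge> 1" using n2 by simp
  define D' where "D' X = msc (- (1 / of_nat n)) (Dder n X)" for X
  have "lin_endo n D'"
    using lin_endo_Dder unfolding lin_endo_def D'_def by (auto simp: slg_msc fun_eq_iff algebra_simps)
  moreover have "minner n (D' X) Y = minner n X (D' Y)" for X Y
    by (simp add: D'_def minner_msc_left minner_msc_right Dder_adjoint)
  moreover have "is_derivation n (mu_inf n) D'"
    using is_derivation_Dder[OF n]
    unfolding is_derivation_def D'_def by (auto simp: fun_eq_iff mu_inf_msc_left mu_inf_msc_right algebra_simps)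
  moreover have "P_op n (mu_inf n) X = madd (msc (complex_of_real (real n)) X) (msc (1/2) (madd (D' X) (D' X)))"
    if "X \<in> slg n" for X
    using that by (intro ext) (simp add: P_op_mu_inf[OF n2] P_inf_def D'_def algebra_simps)
  ultimately have "algebraic_soliton n (mu_inf n) (real n)"
    unfolding algebraic_soliton_def by blast
  thus ?thesis unfolding shrinking_algebraic_soliton_def using n2 by (intro exI[of _ "real n"]) auto
qed

theorem corollary3p10:
  fixes n :: nat and y z :: "real \<Rightarrow> real"
  assumes n2: "n \<ge> 2"
    and pos: "\<And>t. t \<ge> 0 \<Longrightarrow> y t > 0 \<and> z t > 0"
    and ode_y: "\<And>t. t \<ge> 0 \<Longrightarrow>
        (y has_real_derivative ((z t)\<^sup>2 * (real n + 1 - y t) - real n * y t)) (at t within {0..})"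
    and ode_z: "\<And>t. t \<ge> 0 \<Longrightarrow>
        (z has_real_derivative ((real n + 1) / real n * z t * (real n - 1 + y t) - (real n + (z t)\<^sup>2) * z t))
          (at t within {0..})"
    and y0: "(y \<longlongrightarrow> 0) at_top"
    and z0: "(z \<longlongrightarrow> 0) at_top"
  shows "(\<forall>X\<in>slg n. \<forall>Y\<in>slg n. \<forall>a b.
            ((\<lambda>t. mu_yz n (y t) (z t) X Y a b) \<longlongrightarrow> mu_inf n X Y a b) at_top)
       \<and> (\<forall>X\<in>slg n. \<forall>a b.
            ((\<lambda>t. P_op n (mu_yz n (y t) (z t)) X a b) \<longlongrightarrow> P_op n (mu_inf n) X a b) at_top)
       \<and> (\<forall>X\<in>slg n. P_op n (mu_inf n) X =
            mdiff (msc (of_nat n) X) (msc (1 / of_nat n) (Dder n X)))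
       \<and> lin_endo n (Dder n)
       \<and> is_derivation n (mu_inf n) (Dder n)
       \<and> shrinking_algebraic_soliton n (mu_inf n)"
proof -
  have n: "n \<ge> 1" using n2 by simp
  have "\<forall>\<^sub>F t in at_top. y t > 0 \<and> z t > 0"
    using pos by (auto simp: eventually_at_top_linorder)
  hence brackets: "((\<lambda>t. mu_yz n (y t) (z t) X Y a b) \<longlongrightarrow> mu_inf n X Y a b) at_top"
    if "X \<in> slg n" "Y \<in> slg n" for X Y a b
    using mu_yz_tendsto_mu_inf[OF n that _ y0 z0 ode_ratio_tendsto[OF n2 pos ode_y ode_z y0 z0]] by blast
  have "((\<lambda>t. P_op n (mu_yz n (y t) (z t)) X a b) \<longlongrightarrow> P_op n (mu_inf n) X a b) at_top"
    if "X \<in> slg n" for X a b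
    using P_op_mu_yz_tendsto[OF that brackets] .
  thus ?thesis
    using brackets lin_endo_Dder is_derivation_Dder[OF n] shrinking_algebraic_soliton_mu_inf[OF n2]
    by (simp add: P_op_mu_inf[OF n2] P_inf_def)
qed

end
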